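(* Let $L$ be a finite lattice with minimum $\mathbf{0}$ and $F$ a sheaf of finite-dimensional vector spaces on $L$. Then $$\chi\,\mathrm{HS}_*(L\setminus\mathbf{0};F)=\dim F(\mathbf{0})-\chi'_{(L,F)}(1),$$ where $\chi'_{(L,F)}(t)$ is the derivative of $\chi_{(L,F)}(t)=\sum_{x\in L}\mu_L(\mathbf{0},x)t^{\dim F(x)}$.
   Context: Möbius function: $\mu_L(x,x)=1$, $\mu_L(x,y)=-\sum_{x\le z<y}\mu_L(x,z)$ for $x<y$. A sheaf $F$ assigns a vector space $F(x)$ to each element and a linear map $F^y_x:F(y)\to F(x)$ to each $x\le y$, functorially. $\chi\,\mathrm{HS}_*(P;F)=\sum_n(-1)^n\dim\mathrm{HS}_n(P;F)$, where $\mathrm{HS}_*(P;F)$ is the homology of $S_n(P;F)=\bigoplus_\sigma F(x_0)$ over chains $\sigma=(x_n\le\cdots\le x_0)$ in $P$ with $d(s_\sigma)=F^{x_0}_{x_1}(s)_{d_0\sigma}+\sum_{i=1}^n(-1)^is_{d_i\sigma}$ ($d_i\sigma$ omits $x_i$). $L\setminus\mathbf{0}$ is $L$ minus its minimum. *)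

theory Defs
  imports "HOL-Library.Function_Algebras" "HOL-Computational_Algebra.Polynomial"
begin

lemma card_less_mono_finite:
  fixes z y :: "'a::{finite,order}"
  assumes "z < y"
  shows "card {w. w < z} < card {w. w < y}"
proof (rule psubset_card_mono)
  show "finite {w. w < y}" by simp
  show "{w. w < z} \<subset> {w. w < y}"
    using assms by (auto intro: less_trans)
qed

function mobius :: "'a::{finite,order} \<Rightarrow> 'a \<Rightarrow> int" where
  "mobius x y =
     (if x = y then 1
      else if x < y then - (\<Sum>z\<in>{z. x \<le> z \<and> z < y}. mobius x z)
      else 0)"
  by auto
termination
  by (relation "measure (\<lambda>(x, y). card {w. w < y})")
     (auto intro: card_less_mono_finite)

declare mobius.simps [simp del]

text \<open>The vector spaces F(x) are subspaces of a common ambient vector space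
  (over the field 'k with scalar multiplication scale); res y x is the
  restriction map F(y) \<rightarrow> F(x) for x \<le> y.\<close>

definition is_fd_sheaf ::
  "('k::field \<Rightarrow> 'v::ab_group_add \<Rightarrow> 'v) \<Rightarrow> ('a::order \<Rightarrow> 'v set)
    \<Rightarrow> ('a \<Rightarrow> 'a \<Rightarrow> 'v \<Rightarrow> 'v) \<Rightarrow> bool" where
  "is_fd_sheaf scale F res \<longleftrightarrow>
     (\<forall>x. \<exists>B. finite B \<and> B \<subseteq> F x \<and> module.span scale B = F x) \<and>
     (\<forall>x y. x \<le> y \<longrightarrow> (\<forall>v\<in>F y. res y x v \<in> F x)) \<and>
     (\<forall>x y. x \<le> y \<longrightarrow> (\<forall>u\<in>F y. \<forall>v\<in>F y. res y x (u + v) = res y x u + res y x v)) \<and>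
     (\<forall>x y. x \<le> y \<longrightarrow> (\<forall>c. \<forall>v\<in>F y. res y x (scale c v) = scale c (res y x v))) \<and>
     (\<forall>x. \<forall>v\<in>F x. res x x v = v) \<and>
     (\<forall>x y z. x \<le> y \<longrightarrow> y \<le> z \<longrightarrow> (\<forall>v\<in>F z. res y x (res z y v) = res z x v))"

text \<open>A chain sigma = (x_n \<le> ... \<le> x_0) in P is represented by the list
  [x_0, x_1, ..., x_n] of length n+1.\<close>

definition chains :: "'a::order set \<Rightarrow> nat \<Rightarrow> 'a list set" where
  "chains P n = {xs. length xs = Suc n \<and> set xs \<subseteq> P \<and> sorted_wrt (\<lambda>a b. b \<le> a) xs}"

definition face :: "nat \<Rightarrow> 'a list \<Rightarrow> 'a list" where
  "face i xs = take i xs @ drop (Suc i) xs"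

text \<open>S_n(P;F) = direct sum over chains sigma of F(x_0), realised as functions on lists
  supported on chains of length n+1 with value at sigma in F(hd sigma).\<close>
definition chain_space :: "'a::order set \<Rightarrow> ('a \<Rightarrow> 'v::zero set) \<Rightarrow> nat \<Rightarrow> ('a list \<Rightarrow> 'v) set" where
  "chain_space P F n = {s. \<forall>\<sigma>. (\<sigma> \<in> chains P n \<longrightarrow> s \<sigma> \<in> F (hd \<sigma>)) \<and> (\<sigma> \<notin> chains P n \<longrightarrow> s \<sigma> = 0)}"

definition boundary ::
  "'a::{finite,order} set \<Rightarrow> ('a \<Rightarrow> 'a \<Rightarrow> 'v \<Rightarrow> 'v::ab_group_add) \<Rightarrow> nat
     \<Rightarrow> ('a list \<Rightarrow> 'v) \<Rightarrow> ('a list \<Rightarrow> 'v)" where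
  "boundary P res n s = (\<lambda>\<tau>.
     if n = 0 then 0 else
       (\<Sum>\<sigma>\<in>{\<sigma>\<in>chains P n. face 0 \<sigma> = \<tau>}. res (\<sigma> ! 0) (\<sigma> ! 1) (s \<sigma>)) +
       (\<Sum>i\<in>{1..n}. \<Sum>\<sigma>\<in>{\<sigma>\<in>chains P n. face i \<sigma> = \<tau>}.
            (if even i then s \<sigma> else - s \<sigma>)))"

definition fscale :: "('k \<Rightarrow> 'v \<Rightarrow> 'v) \<Rightarrow> 'k \<Rightarrow> ('a list \<Rightarrow> 'v) \<Rightarrow> ('a list \<Rightarrow> 'v)" where
  "fscale scale c s = (\<lambda>\<sigma>. scale c (s \<sigma>))"

definition hs_dim ::
  "('k::field \<Rightarrow> 'v::ab_group_add \<Rightarrow> 'v) \<Rightarrow> 'a::{finite,order} set \<Rightarrow> ('a \<Rightarrow> 'v set)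
     \<Rightarrow> ('a \<Rightarrow> 'a \<Rightarrow> 'v \<Rightarrow> 'v) \<Rightarrow> nat \<Rightarrow> int" where
  "hs_dim scale P F res n =
     int (vector_space.dim (fscale scale) {s \<in> chain_space P F n. boundary P res n s = 0})
     - int (vector_space.dim (fscale scale) (boundary P res (Suc n) ` chain_space P F (Suc n)))"

definition chi_poly ::
  "('k::field \<Rightarrow> 'v::ab_group_add \<Rightarrow> 'v) \<Rightarrow> ('a::{finite,order_bot} \<Rightarrow> 'v set) \<Rightarrow> int poly" where
  "chi_poly scale F = (\<Sum>x\<in>UNIV. monom (mobius bot x) (vector_space.dim scale (F x)))"

end

theory Submission
  imports Defs
begin

text \<open>The chain complex \<open>S\<^sub>*(P;F)\<close> is the direct sum of the subcomplex spanned by chains with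
  pairwise distinct entries and the subcomplex of degenerate chains. The latter is contractible: the
  homotopy sends a degenerate chain, up to sign, to the chain obtained by repeating its first
  repeated entry once more. Hence the Euler characteristic of \<open>HS\<^sub>*(P;F)\<close> is that of the finite
  normalized complex, the alternating sum of \<open>dim F(x\<^sub>0)\<close> over strict chains
  \<open>x\<^sub>n < \<dots> < x\<^sub>0\<close>. Grouped by their top element \<open>x\<close>, the strict chains of \<open>L - {0}\<close>
  contribute \<open>-\<mu>(0,x) dim F(x)\<close> by Philip Hall's theorem, and
  \<open>-(\<Sum>x > 0. \<mu>(0,x) dim F(x)) = dim F(0) - \<chi>'(1)\<close>.\<close>

context vector_space
begin

lemma independent_Un_common_span_eq_0:
  assumes ind: "independent (A \<union> B)" and dis: "A \<inter> B = {}"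
    and fA: "finite A" and fB: "finite B"
    and x1: "x \<in> span A" and x2: "x \<in> span B"
  shows "x = 0"
proof -
  obtain u where u: "x = (\<Sum>v\<in>A. u v *s v)" using x1 span_finite[OF fA] by auto
  obtain w where w: "x = (\<Sum>v\<in>B. w v *s v)" using x2 span_finite[OF fB] by auto
  define c where "c v = (if v \<in> A then u v else - w v)" for v
  have "(\<Sum>v\<in>A \<union> B. c v *s v) = (\<Sum>v\<in>A. c v *s v) + (\<Sum>v\<in>B. c v *s v)"
    using dis fA fB by (simp add: sum.union_disjoint)
  also have "(\<Sum>v\<in>A. c v *s v) = x" unfolding u c_def by (rule sum.cong) auto
  also have "(\<Sum>v\<in>B. c v *s v) = - x" unfolding w c_def using dis
    by (auto simp: sum_negf[symmetric] intro!: sum.cong)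
  finally have z: "(\<Sum>v\<in>A \<union> B. c v *s v) = 0" by simp
  have "\<forall>v\<in>A. c v = 0"
    using independentD[OF ind _ _ z] fA fB by auto
  then have "\<forall>v\<in>A. u v = 0" by (auto simp: c_def)
  then show ?thesis unfolding u by simp
qed

end

context vector_space_pair
begin

lemma linear_inj_on_span_complement:
  assumes lin: "Vector_Spaces.linear s1 s2 f"
    and ind: "vs1.independent (K \<union> E)" and dis: "K \<inter> E = {}" and fin: "finite K" "finite E"
    and ker: "\<And>x. x \<in> vs1.span E \<Longrightarrow> f x = 0 \<Longrightarrow> x \<in> vs1.span K"
  shows "inj_on f (vs1.span E)"
  unfolding linear_inj_on_iff_eq_0[OF lin vs1.subspace_span]
  using vs1.independent_Un_common_span_eq_0[OF ind dis fin] ker by blast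

lemma linear_image_span_complement:
  assumes lin: "Vector_Spaces.linear s1 s2 f"
    and W: "W \<subseteq> vs1.span (K \<union> E)" and ker: "\<And>k. k \<in> vs1.span K \<Longrightarrow> f k = 0"
  shows "f ` W \<subseteq> vs2.span (f ` E)"
proof
  fix y assume "y \<in> f ` W"
  then obtain k e where ke: "k \<in> vs1.span K" "e \<in> vs1.span E" "y = f (k + e)"
    using W unfolding vs1.span_Un by auto
  then have "y = f e" using ker linear_add[OF lin] by simp
  then show "y \<in> vs2.span (f ` E)" using ke(2) linear_span_image[OF lin, of E] by auto
qed

lemma dim_eq_dim_kernel_add_dim_image:
  assumes lin: "Vector_Spaces.linear s1 s2 f" and W: "vs1.subspace W"
    and fin: "finite W0" and Wsp: "W \<subseteq> vs1.span W0"
  shows "vs1.dim W = vs1.dim {x\<in>W. f x = 0} + vs2.dim (f ` W)"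
proof -
  let ?K = "{x\<in>W. f x = 0}"
  have Ksub: "vs1.subspace ?K"
    using W linear_0[OF lin] linear_add[OF lin] linear_scale[OF lin]
    unfolding vs1.subspace_def by auto
  obtain BK where BK: "BK \<subseteq> ?K" "vs1.independent BK" "?K \<subseteq> vs1.span BK" "card BK = vs1.dim ?K"
    using vs1.basis_exists by blast
  obtain BW where BW: "BK \<subseteq> BW" "BW \<subseteq> W" "vs1.independent BW" "W \<subseteq> vs1.span BW"
    using vs1.maximal_independent_subset_extend[of BK W] BK by auto
  have finBW: "finite BW"
    using vs1.independent_span_bound[OF fin BW(3)] BW(2) Wsp by auto
  have dW: "vs1.dim W = card BW"
    using vs1.basis_card_eq_dim[OF BW(2) BW(4) BW(3)] by simp
  define E where "E = BW - BK"
  have finE: "finite E" "finite BK" using finBW BW(1) E_def by (auto intro: finite_subset)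
  have cardBW: "card BW = card BK + card E"
    unfolding E_def using finBW BW(1)
    by (metis card_Diff_subset card_mono finite_subset le_add_diff_inverse)
  have spBK: "vs1.span BK \<subseteq> ?K"
    using vs1.span_minimal[OF BK(1) Ksub] .
  have EW: "vs1.span E \<subseteq> W"
    using vs1.span_minimal[of E W] BW(2) W E_def by auto
  have "vs1.independent (BK \<union> E)" using BW E_def by (metis Diff_partition)
  moreover have "x \<in> vs1.span BK" if "x \<in> vs1.span E" "f x = 0" for x
    using that EW BK(3) by auto
  ultimately have inj: "inj_on f (vs1.span E)"
    using linear_inj_on_span_complement[OF lin] finE E_def by blast
  have indE: "vs2.independent (f ` E)"
    using linear_independent_injective_image[OF lin _ inj] vs1.independent_mono[OF BW(3)] E_def by auto
  have cardE: "card (f ` E) = card E"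
    using card_image inj vs1.span_superset inj_on_subset by metis
  have "BK \<union> E = BW" using BW(1) E_def by auto
  then have "f ` W \<subseteq> vs2.span (f ` E)"
    using linear_image_span_complement[OF lin] BW(4) spBK by blast
  moreover have "f ` E \<subseteq> f ` W" using BW(2) E_def by auto
  ultimately have "vs2.dim (f ` W) = card (f ` E)"
    using vs2.dim_unique[OF _ _ indE refl] by blast
  then show ?thesis using dW cardBW cardE BK(4) by simp
qed

end

context vector_space
begin

lemma dim_zero_subspace: "dim {0} = 0"
  using dim_span_eq_card_independent[OF independent_empty] by simp

lemma exists_linear_projection:
  assumes "subspace V"
  shows "\<exists>p. Vector_Spaces.linear scale scale p \<and> (\<forall>v\<in>V. p v = v) \<and> (\<forall>v. p v \<in> V)"
proof -
  obtain BV where BV: "BV \<subseteq> V" "independent BV" "V \<subseteq> span BV"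
    using maximal_independent_subset by blast
  obtain B where B: "BV \<subseteq> B" "independent B" "UNIV \<subseteq> span B"
    using maximal_independent_subset_extend[of BV UNIV] BV by auto
  interpret vp: vector_space_pair scale scale by unfold_locales
  obtain g where g: "Vector_Spaces.linear scale scale g" "\<forall>x\<in>B. g x = (if x \<in> BV then x else 0)"
    "range g = span ((\<lambda>x. if x \<in> BV then x else 0) ` B)"
    using vp.linear_independent_extend_subspace[OF B(2), where f="\<lambda>x. if x \<in> BV then x else 0"] by blast
  have spV: "span BV = V" using BV assms span_subspace by blast
  have "span ((\<lambda>x. if x \<in> BV then x else 0) ` B) \<subseteq> span BV"
    by (rule span_minimal) (auto simp: span_zero span_base)
  then have r: "range g \<subseteq> V" using g(3) spV by auto
  have "\<forall>v\<in>V. g v = v"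
  proof
    fix v assume "v \<in> V"
    then have "v \<in> span BV" using spV by auto
    have e: "\<And>x. x \<in> BV \<Longrightarrow> g x = id x" using g(2) B(1) by auto
    show "g v = v" using vp.linear_eq_on_span[OF g(1) linear_id e] \<open>v \<in> span BV\<close> by simp
  qed
  then show ?thesis using g(1) r by blast
qed

end

lemma vector_space_fscale: "vector_space scale \<Longrightarrow> vector_space (fscale scale)"
  unfolding vector_space_def module_def fscale_def
  by (auto simp: fun_eq_iff)

lemma sum_apply: "(\<Sum>i\<in>I. f i) x = (\<Sum>i\<in>I. f i x)"
  by (induct I rule: infinite_finite_induct) auto

definition signed :: "nat \<Rightarrow> 'v::ab_group_add \<Rightarrow> 'v" where
  "signed i v = (if even i then v else - v)"

lemma signed_signed: "signed i (signed j x) = signed (i + j) x"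
  by (simp add: signed_def)

lemma signed_Suc: "signed (Suc i) x = - signed i x"
  by (simp add: signed_def)

lemma signed_0 [simp]: "signed i 0 = 0"
  by (simp add: signed_def)

lemma signed_apply: "signed i f x = signed i (f x)"
  by (simp add: signed_def)

lemma signed_sum: "signed i (sum f A) = (\<Sum>a\<in>A. signed i (f a))"
  by (simp add: signed_def sum_negf)

lemma additive_signed: "additive (signed i)"
  by unfold_locales (simp add: signed_def)

lemma alternating_double_sum_eq_0:
  fixes X :: "nat \<Rightarrow> nat \<Rightarrow> 'v::ab_group_add"
  assumes X: "\<And>i j. i < j \<Longrightarrow> j \<le> m \<Longrightarrow> X i j = X (j - 1) i"
  shows "(\<Sum>i<m. \<Sum>j\<le>m. signed (i + j) (X i j)) = 0"
proof -
  let ?A1 = "{(i,j). i < j \<and> j \<le> m}"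
  let ?A2 = "{(i,j). j \<le> i \<and> i < m}"
  have fin: "finite ?A1" "finite ?A2"
    by (rule finite_subset[of _ "{..m} \<times> {..m}"], auto)+
  have "{..<m} \<times> {..m} = ?A1 \<union> ?A2" "?A1 \<inter> ?A2 = {}" by auto
  then have "(\<Sum>i<m. \<Sum>j\<le>m. signed (i + j) (X i j))
      = (\<Sum>(i,j)\<in>?A1. signed (i + j) (X i j)) + (\<Sum>(i,j)\<in>?A2. signed (i + j) (X i j))"
    using fin by (simp add: sum.cartesian_product sum.union_disjoint[OF fin])
  moreover have "(\<Sum>(i,j)\<in>?A1. signed (i + j) (X i j)) = (\<Sum>(a,b)\<in>?A2. signed (Suc (a + b)) (X a b))"
    by (rule sum.reindex_bij_witness[where i = "\<lambda>(a,b). (b, Suc a)" and j = "\<lambda>(i,j). (j - 1, i)"])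
      (auto simp: X add.commute)
  ultimately show ?thesis by (simp add: signed_Suc sum_negf case_prod_unfold)
qed

lemma sum_split_three:
  assumes "Suc (Suc p) \<le> N"
  shows "(\<Sum>i\<in>{0..N}. f i) = (\<Sum>i\<in>{0..<p}. f i) + f p + f (Suc p) + f (Suc (Suc p))
     + (\<Sum>i\<in>{Suc (Suc p)..<N}. f (Suc i))"
proof -
  have "{0..N} = {0..<p} \<union> {p, Suc p, Suc (Suc p)} \<union> {Suc (Suc (Suc p))..<Suc N}" using assms by auto
  moreover have "(\<Sum>i\<in>{Suc (Suc (Suc p))..<Suc N}. f i) = (\<Sum>i\<in>{Suc (Suc p)..<N}. f (Suc i))"
    by (rule sum.shift_bounds_Suc_ivl)
  ultimately show ?thesis by (simp add: sum.union_disjoint ivl_disj_int add_ac)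
qed

lemma sum_split_two:
  assumes "Suc p \<le> N"
  shows "(\<Sum>i\<in>{0..N}. f i) = (\<Sum>i\<in>{0..<p}. f i) + f p + f (Suc p) + (\<Sum>i\<in>{Suc (Suc p)..<Suc N}. f i)"
proof -
  have "{0..N} = {0..<p} \<union> {p, Suc p} \<union> {Suc (Suc p)..<Suc N}" using assms by auto
  then show ?thesis by (simp add: sum.union_disjoint ivl_disj_int add_ac)
qed

lemma alternating_sum_telescope:
  fixes d b :: "nat \<Rightarrow> int"
  shows "(\<Sum>n<M. (-1)^n * (d n - b n - b (Suc n))) = (\<Sum>n<M. (-1)^n * d n) - b 0 + (-1)^M * b M"
  by (induction M) (auto simp: algebra_simps)

section \<open>Chains, faces and degeneracies\<close>

lemma face_length[simp]: "i < length xs \<Longrightarrow> length (face i xs) = length xs - 1"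
  by (simp add: face_def)

lemma face_nth: "i < length xs \<Longrightarrow> k < length xs - 1 \<Longrightarrow>
  face i xs ! k = (if k < i then xs ! k else xs ! Suc k)"
  by (auto simp: face_def nth_append min_def)

lemma face_face: "i < j \<Longrightarrow> j < length xs \<Longrightarrow> face i (face j xs) = face (j - 1) (face i xs)"
  by (rule nth_equalityI) (auto simp: face_nth)

definition degeneracy :: "nat \<Rightarrow> 'a list \<Rightarrow> 'a list" where
  "degeneracy p xs = take (Suc p) xs @ drop p xs"

lemma degeneracy_length[simp]: "p < length xs \<Longrightarrow> length (degeneracy p xs) = Suc (length xs)"
  by (simp add: degeneracy_def)

lemma degeneracy_nth: "p < length xs \<Longrightarrow> k < Suc (length xs) \<Longrightarrow>
  degeneracy p xs ! k = (if k \<le> p then xs ! k else xs ! (k - 1))"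
proof -
  assume a: "p < length xs" "k < Suc (length xs)"
  show ?thesis
  proof (cases "k \<le> p")
    case True then show ?thesis using a by (auto simp: degeneracy_def nth_append min_def)
  next
    case False
    have lt: "length (take (Suc p) xs) = Suc p" using a by simp
    have "degeneracy p xs ! k = drop p xs ! (k - length (take (Suc p) xs))"
      unfolding degeneracy_def using False lt by (subst nth_append) simp
    then have "degeneracy p xs ! k = drop p xs ! (k - Suc p)" using lt by simp
    also have "\<dots> = xs ! (k - 1)" using a False by simp
    finally show ?thesis using False by simp
  qed
qed

definition first_repeat :: "'a list \<Rightarrow> nat" where
  "first_repeat xs = (LEAST p. Suc p < length xs \<and> xs ! p = xs ! Suc p)"

lemma first_repeat_props:
  assumes "Suc q < length xs" "xs ! q = xs ! Suc q"
  shows "Suc (first_repeat xs) < length xs" "xs ! first_repeat xs = xs ! Suc (first_repeat xs)"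
    "\<And>k. k < first_repeat xs \<Longrightarrow> xs ! k \<noteq> xs ! Suc k"
proof -
  have ex: "\<exists>p. Suc p < length xs \<and> xs ! p = xs ! Suc p" using assms by blast
  show "Suc (first_repeat xs) < length xs" "xs ! first_repeat xs = xs ! Suc (first_repeat xs)"
    unfolding first_repeat_def using LeastI_ex[OF ex] by auto
  then show "xs ! k \<noteq> xs ! Suc k" if "k < first_repeat xs" for k
    using not_less_Least[OF that[unfolded first_repeat_def]] that by simp
qed

lemma first_repeat_eqI:
  assumes "Suc p < length xs" "xs ! p = xs ! Suc p" "\<And>k. k < p \<Longrightarrow> xs ! k \<noteq> xs ! Suc k"
  shows "first_repeat xs = p"
  unfolding first_repeat_def
  by (rule Least_equality) (use assms in \<open>auto simp: not_less[symmetric]\<close>)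

lemma chainsD: "xs \<in> chains P n \<Longrightarrow> length xs = Suc n \<and> set xs \<subseteq> P \<and> sorted_wrt (\<lambda>a b. b \<le> a) xs"
  by (simp add: chains_def)

lemma chain_nth_le:
  assumes "xs \<in> chains P n" "i \<le> j" "j \<le> n"
  shows "xs ! j \<le> xs ! i"
proof (cases "i = j")
  case False
  then show ?thesis using assms unfolding chains_def sorted_wrt_iff_nth_less by auto
qed simp

lemma chain_nth_in: "xs \<in> chains P n \<Longrightarrow> i \<le> n \<Longrightarrow> xs ! i \<in> P"
  unfolding chains_def using nth_mem by fastforce

lemma chainsI:
  assumes "length xs = Suc n" "\<And>i. i \<le> n \<Longrightarrow> xs ! i \<in> P"
    "\<And>i j. i < j \<Longrightarrow> j \<le> n \<Longrightarrow> xs ! j \<le> xs ! i"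
  shows "xs \<in> chains P n"
  unfolding chains_def sorted_wrt_iff_nth_less using assms
  by (auto simp: set_conv_nth less_Suc_eq_le)

lemma finite_chains: "finite (chains (P::'a::{finite,order} set) n)"
proof -
  have "chains P n \<subseteq> {xs. set xs \<subseteq> UNIV \<and> length xs = Suc n}" by (auto simp: chains_def)
  then show ?thesis using finite_lists_length_eq[of "UNIV::'a set" "Suc n"] finite_subset by auto
qed

lemma face_in_chains:
  assumes "xs \<in> chains P (Suc n)" "i \<le> Suc n"
  shows "face i xs \<in> chains P n"
proof (rule chainsI)
  have l: "length xs = Suc (Suc n)" using assms chainsD by blast
  show "length (face i xs) = Suc n" using l assms by simp
  show "face i xs ! k \<in> P" if "k \<le> n" for k
    using that l assms by (auto simp: face_nth intro!: chain_nth_in[OF assms(1)])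
  show "face i xs ! k \<le> face i xs ! j" if "j < k" "k \<le> n" for j k
    using that l assms by (auto simp: face_nth intro!: chain_nth_le[OF assms(1)])
qed

lemma degeneracy_in_chains:
  assumes "xs \<in> chains P n" "p \<le> n"
  shows "degeneracy p xs \<in> chains P (Suc n)"
proof (rule chainsI)
  have l: "length xs = Suc n" using assms chainsD by blast
  show "length (degeneracy p xs) = Suc (Suc n)" using l assms by simp
  show "degeneracy p xs ! k \<in> P" if "k \<le> Suc n" for k
    using that l assms by (auto simp: degeneracy_nth intro!: chain_nth_in[OF assms(1)])
  show "degeneracy p xs ! k \<le> degeneracy p xs ! j" if "j < k" "k \<le> Suc n" for j k
    using that l assms by (auto simp: degeneracy_nth intro!: chain_nth_le[OF assms(1)])
qed

lemma chain_hd_conv_nth: "xs \<in> chains P n \<Longrightarrow> hd xs = xs ! 0"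
  by (cases xs) (auto simp: chains_def)

lemma chain_adjacent_repeat:
  assumes "xs \<in> chains P n" "\<not> distinct xs"
  shows "\<exists>q. Suc q < length xs \<and> xs ! q = xs ! Suc q"
proof -
  have l: "length xs = Suc n" using assms chainsD by blast
  obtain i j where ij: "i < j" "j < length xs" "xs ! i = xs ! j"
    using assms(2) unfolding distinct_conv_nth by (metis linorder_neqE_nat)
  have "xs ! Suc i \<le> xs ! i" "xs ! j \<le> xs ! Suc i"
    using ij l chain_nth_le[OF assms(1), of i "Suc i"] chain_nth_le[OF assms(1), of "Suc i" j] by auto
  then have "xs ! i = xs ! Suc i" using ij by (metis order.antisym)
  moreover have "Suc i < length xs" using ij by simp
  ultimately show ?thesis by blast
qed

lemma distinct_face: "distinct xs \<Longrightarrow> i < length xs \<Longrightarrow> distinct (face i xs)"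
  unfolding distinct_conv_nth by (auto simp: face_nth)

lemma chain_nth_neq_Suc_Suc:
  assumes "xs \<in> chains P n" "Suc (Suc k) \<le> n" "xs ! k \<noteq> xs ! Suc k"
  shows "xs ! k \<noteq> xs ! Suc (Suc k)"
proof
  assume e: "xs ! k = xs ! Suc (Suc k)"
  have "xs ! Suc k \<le> xs ! k" "xs ! Suc (Suc k) \<le> xs ! Suc k"
    using assms chain_nth_le[OF assms(1)] by auto
  then show False using e assms(3) by (metis order.antisym)
qed

lemma chain_le_hd:
  assumes "\<tau> \<in> chains P n" "y \<in> set \<tau>"
  shows "y \<le> hd \<tau>"
proof -
  obtain i where i: "i < length \<tau>" "\<tau> ! i = y" using assms(2) by (auto simp: in_set_conv_nth)
  have "\<tau> ! i \<le> \<tau> ! 0" using chain_nth_le[of \<tau> P n 0 i] assms i chainsD by fastforce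
  then show ?thesis using assms i chain_hd_conv_nth[of \<tau> P n] by auto
qed

lemma Cons_in_chains_iff:
  "x # \<tau> \<in> chains P (Suc n) \<longleftrightarrow> x \<in> P \<and> \<tau> \<in> chains P n \<and> hd \<tau> \<le> x"
proof
  assume a: "x # \<tau> \<in> chains P (Suc n)"
  then have "\<tau> \<in> chains P n" "x \<in> P" by (auto simp: chains_def)
  moreover have "hd \<tau> \<le> x" using a by (cases \<tau>) (auto simp: chains_def)
  ultimately show "x \<in> P \<and> \<tau> \<in> chains P n \<and> hd \<tau> \<le> x" by simp
next
  assume a: "x \<in> P \<and> \<tau> \<in> chains P n \<and> hd \<tau> \<le> x"
  then have "\<forall>y\<in>set \<tau>. y \<le> x" using chain_le_hd order_trans by blast
  then show "x # \<tau> \<in> chains P (Suc n)" using a by (auto simp: chains_def)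
qed

lemma distinct_chain_length_less:
  fixes \<sigma> :: "'a::{finite,order} list"
  assumes "\<sigma> \<in> chains P n" "distinct \<sigma>"
  shows "n < card (UNIV :: 'a set)"
proof -
  have "Suc n = card (set \<sigma>)" using assms chainsD distinct_card by metis
  also have "\<dots> \<le> card (UNIV :: 'a set)" by (rule card_mono) auto
  finally show ?thesis by simp
qed

locale degenerate_chain =
  fixes P :: "'a::order set" and n :: nat and xs :: "'a list"
  assumes ch: "xs \<in> chains P n" and nd: "\<not> distinct xs"
begin

abbreviation p where "p \<equiv> first_repeat xs"

lemma length_xs: "length xs = Suc n" using ch chainsD by blast

lemma repeat_props: "Suc p \<le> n" "xs ! p = xs ! Suc p" "\<And>k. k < p \<Longrightarrow> xs ! k \<noteq> xs ! Suc k"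
proof -
  obtain q where "Suc q < length xs" "xs ! q = xs ! Suc q" using chain_adjacent_repeat[OF ch nd] by blast
  from first_repeat_props[OF this]
  show "Suc p \<le> n" "xs ! p = xs ! Suc p" "\<And>k. k < p \<Longrightarrow> xs ! k \<noteq> xs ! Suc k"
    using length_xs by auto
qed

lemma face_degeneracy_below: "i < p \<Longrightarrow> face i (degeneracy p xs) = degeneracy (p - 1) (face i xs)"
  using repeat_props length_xs by (intro nth_equalityI) (auto simp: face_nth degeneracy_nth)

lemma first_repeat_face_below: assumes "i < p" shows "first_repeat (face i xs) = p - 1"
proof (rule first_repeat_eqI)
  show "Suc (p - 1) < length (face i xs)" using assms repeat_props length_xs by simp
  have e: "Suc (p - 1) = p" "\<not> p - 1 < i" "\<not> p < i" using assms by auto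
  show "face i xs ! (p - 1) = face i xs ! Suc (p - 1)" unfolding e(1)
    using assms repeat_props length_xs e by (simp add: face_nth)
  show "face i xs ! k \<noteq> face i xs ! Suc k" if "k < p - 1" for k
  proof -
    consider "Suc k < i" | "Suc k = i" | "i \<le> k" by linarith
    then show ?thesis
    proof cases
      case 1 then show ?thesis using that assms repeat_props length_xs by (simp add: face_nth)
    next
      case 2
      have "xs ! k \<noteq> xs ! Suc k" using repeat_props(3) that by simp
      then have "xs ! k \<noteq> xs ! Suc (Suc k)"
        using chain_nth_neq_Suc_Suc[OF ch, of k] that repeat_props(1) by simp
      then show ?thesis using 2 that assms repeat_props length_xs by (simp add: face_nth)
    next
      case 3 then show ?thesis using that assms repeat_props length_xs by (simp add: face_nth)
    qed
  qed
qed

lemma not_distinct_face_below: assumes "i < p" shows "\<not> distinct (face i xs)"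
proof -
  have e: "Suc (p - 1) = p" "\<not> p - 1 < i" "\<not> p < i" using assms by auto
  have "Suc (p - 1) < length (face i xs)" "face i xs ! (p - 1) = face i xs ! Suc (p - 1)"
    unfolding e(1) using assms repeat_props length_xs e by (simp_all add: face_nth)
  then show ?thesis unfolding distinct_conv_nth by (metis Suc_lessD n_not_Suc_n)
qed

lemma face_degeneracy_at: "face p (degeneracy p xs) = xs"
  using repeat_props length_xs by (intro nth_equalityI) (auto simp: face_nth degeneracy_nth)

lemma face_Suc_degeneracy_at: "face (Suc p) (degeneracy p xs) = xs"
  using repeat_props length_xs by (intro nth_equalityI) (auto simp: face_nth degeneracy_nth)

lemma face_Suc_Suc_degeneracy_at: "face (Suc (Suc p)) (degeneracy p xs) = xs"
proof (rule nth_equalityI)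
  show "length (face (Suc (Suc p)) (degeneracy p xs)) = length xs" using repeat_props length_xs by simp
  show "face (Suc (Suc p)) (degeneracy p xs) ! i = xs ! i"
    if "i < length (face (Suc (Suc p)) (degeneracy p xs))" for i
    using that repeat_props length_xs by (cases "i = Suc p") (auto simp: face_nth degeneracy_nth)
qed

lemma face_degeneracy_above:
  "Suc (Suc p) \<le> i \<Longrightarrow> i \<le> n \<Longrightarrow> face (Suc i) (degeneracy p xs) = degeneracy p (face i xs)"
  using repeat_props length_xs by (intro nth_equalityI) (auto simp: face_nth degeneracy_nth)

lemma first_repeat_face_above: assumes "Suc (Suc p) \<le> i" "i \<le> n" shows "first_repeat (face i xs) = p"
proof (rule first_repeat_eqI)
  show "Suc p < length (face i xs)" using assms repeat_props length_xs by simp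
  show "face i xs ! p = face i xs ! Suc p" using assms repeat_props length_xs by (simp add: face_nth)
  show "face i xs ! k \<noteq> face i xs ! Suc k" if "k < p" for k
    using that assms repeat_props(3)[of k] length_xs by (simp add: face_nth)
qed

lemma not_distinct_face_above: assumes "Suc (Suc p) \<le> i" "i \<le> n" shows "\<not> distinct (face i xs)"
proof -
  have "Suc p < length (face i xs)" "face i xs ! p = face i xs ! Suc p"
    using assms repeat_props length_xs by (simp_all add: face_nth)
  then show ?thesis unfolding distinct_conv_nth by (metis Suc_lessD n_not_Suc_n)
qed

lemma face_at_repeat: "face p xs = face (Suc p) xs"
proof (rule nth_equalityI)
  show "length (face p xs) = length (face (Suc p) xs)" using repeat_props length_xs by simp
  show "face p xs ! i = face (Suc p) xs ! i" if "i < length (face p xs)" for i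
    using that repeat_props length_xs by (cases "i = p") (auto simp: face_nth)
qed

lemma degeneracy_in_chains_at_repeat: "degeneracy p xs \<in> chains P (Suc n)"
  using degeneracy_in_chains[OF ch] repeat_props(1) by simp

lemma hd_degeneracy_at_repeat: "hd (degeneracy p xs) = hd xs"
proof -
  have "degeneracy p xs ! 0 = xs ! 0" using length_xs repeat_props(1) by (simp add: degeneracy_nth)
  then show ?thesis
    using chain_hd_conv_nth[OF degeneracy_in_chains_at_repeat] chain_hd_conv_nth[OF ch] by simp
qed

end

definition pushforward ::
  "'b set \<Rightarrow> ('b \<Rightarrow> 'c) \<Rightarrow> ('b \<Rightarrow> 'v \<Rightarrow> 'v) \<Rightarrow> ('b \<Rightarrow> 'v::ab_group_add) \<Rightarrow> ('c \<Rightarrow> 'v)" where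
  "pushforward A g c s = (\<lambda>\<tau>. \<Sum>\<sigma>\<in>{\<sigma>\<in>A. g \<sigma> = \<tau>}. c \<sigma> (s \<sigma>))"

lemma pushforward_pushforward:
  assumes fA: "finite A" and fB: "finite B"
    and add: "\<And>\<tau>. additive (c2 \<tau>)"
  shows "pushforward B g2 c2 (pushforward A g1 c1 s) \<tau>
    = (\<Sum>\<sigma>\<in>{\<sigma>\<in>A. g1 \<sigma> \<in> B \<and> g2 (g1 \<sigma>) = \<tau>}. c2 (g1 \<sigma>) (c1 \<sigma> (s \<sigma>)))"
proof -
  have "pushforward B g2 c2 (pushforward A g1 c1 s) \<tau>
      = (\<Sum>\<rho>\<in>{\<rho>\<in>B. g2 \<rho> = \<tau>}. \<Sum>\<sigma>\<in>{\<sigma>\<in>A. g1 \<sigma> = \<rho>}. c2 \<rho> (c1 \<sigma> (s \<sigma>)))"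
    unfolding pushforward_def by (rule sum.cong[OF refl]) (simp add: additive.sum[OF add])
  also have "\<dots> = (\<Sum>\<rho>\<in>{\<rho>\<in>B. g2 \<rho> = \<tau>}.
      \<Sum>\<sigma>\<in>{\<sigma>\<in>{\<sigma>\<in>A. g1 \<sigma> \<in> B \<and> g2 (g1 \<sigma>) = \<tau>}. g1 \<sigma> = \<rho>}. c2 (g1 \<sigma>) (c1 \<sigma> (s \<sigma>)))"
    by (rule sum.cong[OF refl], rule sum.cong) auto
  also have "\<dots> = (\<Sum>\<sigma>\<in>{\<sigma>\<in>A. g1 \<sigma> \<in> B \<and> g2 (g1 \<sigma>) = \<tau>}. c2 (g1 \<sigma>) (c1 \<sigma> (s \<sigma>)))"
    by (rule sum.group) (use fA fB in auto)
  finally show ?thesis .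
qed

lemma pushforward_sum:
  assumes "\<And>\<sigma>. additive (c \<sigma>)"
  shows "pushforward A g c (\<lambda>\<sigma>. \<Sum>j\<in>J. h j \<sigma>) \<tau> = (\<Sum>j\<in>J. pushforward A g c (h j) \<tau>)"
  unfolding pushforward_def by (simp add: additive.sum[OF assms] sum.swap[of _ J])

lemma pushforward_signed:
  assumes "\<And>\<sigma>. additive (c \<sigma>)"
  shows "pushforward A g c (\<lambda>\<sigma>. signed j (h \<sigma>)) \<tau> = signed j (pushforward A g c h \<tau>)"
  unfolding pushforward_def signed_def by (simp add: additive.minus[OF assms] sum_negf)

context vector_space
begin

lemma linear_signed: "Vector_Spaces.linear scale scale (signed i)"
  unfolding Vector_Spaces.linear_iff signed_def
  using vector_space_axioms by (auto simp: scale_minus_right)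

lemma linear_pushforward:
  fixes A :: "'c list set" and g :: "'c list \<Rightarrow> 'c list"
  assumes "\<And>\<sigma>. Vector_Spaces.linear scale scale (c \<sigma>)"
  shows "Vector_Spaces.linear (fscale scale) (fscale scale) (pushforward A g c)"
proof -
  have a: "c \<sigma> (u + v) = c \<sigma> u + c \<sigma> v" "c \<sigma> (k *s u) = k *s c \<sigma> u" for \<sigma> u v k
    using assms by (simp_all add: Vector_Spaces.linear_iff)
  show ?thesis unfolding Vector_Spaces.linear_iff
    using vector_space_fscale[OF vector_space_axioms]
    by (auto simp: pushforward_def fun_eq_iff fscale_def a sum.distrib scale_sum_right)
qed

end

section \<open>The chain complex of a sheaf\<close>

locale sheaf_on =
  fixes scale :: "'k::field \<Rightarrow> 'v::ab_group_add \<Rightarrow> 'v"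
    and F :: "'a::{finite,order} \<Rightarrow> 'v set"
    and res :: "'a \<Rightarrow> 'a \<Rightarrow> 'v \<Rightarrow> 'v"
    and P :: "'a set"
  assumes vs: "vector_space scale" and sh: "is_fd_sheaf scale F res"
begin

sublocale V: vector_space scale by (rule vs)
sublocale FS: vector_space "fscale scale" by (rule vector_space_fscale[OF vs])
sublocale VP: vector_space_pair scale scale ..
sublocale FP: vector_space_pair "fscale scale" "fscale scale" ..
sublocale FVP: vector_space_pair "fscale scale" scale ..
sublocale VFP: vector_space_pair scale "fscale scale" ..

lemma F_span: "\<exists>B. finite B \<and> B \<subseteq> F x \<and> V.span B = F x"
  using sh unfolding is_fd_sheaf_def by (elim conjE) blast

lemma res_in: "x \<le> y \<Longrightarrow> v \<in> F y \<Longrightarrow> res y x v \<in> F x"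
  using sh unfolding is_fd_sheaf_def by (elim conjE) blast

lemma res_add: "x \<le> y \<Longrightarrow> u \<in> F y \<Longrightarrow> v \<in> F y \<Longrightarrow> res y x (u + v) = res y x u + res y x v"
  using sh unfolding is_fd_sheaf_def by simp

lemma res_scale: "x \<le> y \<Longrightarrow> v \<in> F y \<Longrightarrow> res y x (scale c v) = scale c (res y x v)"
  using sh unfolding is_fd_sheaf_def by simp

lemma res_id: "v \<in> F x \<Longrightarrow> res x x v = v"
  using sh unfolding is_fd_sheaf_def by simp

lemma res_comp: "x \<le> y \<Longrightarrow> y \<le> z \<Longrightarrow> v \<in> F z \<Longrightarrow> res y x (res z y v) = res z x v"
  using sh unfolding is_fd_sheaf_def by simp

lemma subspace_F: "V.subspace (F x)"
  using F_span[of x] by (metis V.subspace_span)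

lemma F_0: "0 \<in> F x" using subspace_F V.subspace_0 by blast
lemma F_sum: "(\<And>i. i \<in> I \<Longrightarrow> f i \<in> F x) \<Longrightarrow> sum f I \<in> F x" using subspace_F V.subspace_sum by blast
lemma F_signed: "u \<in> F x \<Longrightarrow> signed i u \<in> F x" by (simp add: signed_def subspace_F V.subspace_neg)

text \<open>The restriction maps are only linear on \<open>F y\<close>; composing with a linear projection onto
  \<open>F y\<close> makes them linear on the whole ambient space, so that they commute with all sums.\<close>

definition proj :: "'a \<Rightarrow> 'v \<Rightarrow> 'v" where
  "proj x = (SOME p. Vector_Spaces.linear scale scale p \<and> (\<forall>v\<in>F x. p v = v) \<and> (\<forall>v. p v \<in> F x))"

lemma projection_proj:
  "Vector_Spaces.linear scale scale (proj x)" "\<And>v. v \<in> F x \<Longrightarrow> proj x v = v" "\<And>v. proj x v \<in> F x"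
proof -
  have "\<exists>p. Vector_Spaces.linear scale scale p \<and> (\<forall>v\<in>F x. p v = v) \<and> (\<forall>v. p v \<in> F x)"
    using V.exists_linear_projection[OF subspace_F] .
  from someI_ex[OF this] show
    "Vector_Spaces.linear scale scale (proj x)" "\<And>v. v \<in> F x \<Longrightarrow> proj x v = v" "\<And>v. proj x v \<in> F x"
    unfolding proj_def by auto
qed

definition res_lin :: "'a \<Rightarrow> 'a \<Rightarrow> 'v \<Rightarrow> 'v" where
  "res_lin y x v = (if x \<le> y then res y x (proj y v) else 0)"

lemma linear_res_lin: "Vector_Spaces.linear scale scale (res_lin y x)"
proof -
  have a: "proj y (u + v) = proj y u + proj y v" "proj y (scale c u) = scale c (proj y u)" for u v c
    using VP.linear_add[OF projection_proj(1)] VP.linear_scale[OF projection_proj(1)] by auto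
  show ?thesis unfolding Vector_Spaces.linear_iff
    using vs by (auto simp: res_lin_def a res_add res_scale projection_proj(3))
qed

lemma res_lin_add: "res_lin y x (u + v) = res_lin y x u + res_lin y x v"
  using VP.linear_add[OF linear_res_lin] .
lemma res_lin_in: "res_lin y x v \<in> F x"
  by (simp add: res_lin_def res_in projection_proj(3) F_0)

lemma res_lin_eq: "x \<le> y \<Longrightarrow> v \<in> F y \<Longrightarrow> res_lin y x v = res y x v"
  by (simp add: res_lin_def projection_proj(2))

lemma res_lin_id: "v \<in> F x \<Longrightarrow> res_lin x x v = v"
  by (simp add: res_lin_eq res_id)

lemma res_lin_comp: "x \<le> y \<Longrightarrow> y \<le> z \<Longrightarrow> res_lin y x (res_lin z y v) = res_lin z x v"
  by (simp add: res_lin_def res_in projection_proj res_comp order_trans[of x y z])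

lemma res_lin_neg: "res_lin y x (- v) = - res_lin y x v"
  using VP.linear_neg[OF linear_res_lin] .

lemma res_lin_signed: "res_lin y x (signed i v) = signed i (res_lin y x v)"
  by (simp add: signed_def res_lin_neg)

definition face_coeff :: "nat \<Rightarrow> 'a list \<Rightarrow> 'v \<Rightarrow> 'v" where
  "face_coeff i \<sigma> v = (if i = 0 then res_lin (\<sigma> ! 0) (\<sigma> ! 1) v else v)"

lemma linear_face_coeff: "Vector_Spaces.linear scale scale (face_coeff i \<sigma>)"
  using linear_res_lin V.linear_ident by (cases "i = 0") (simp_all add: face_coeff_def[abs_def])

lemma additive_face_coeff: "additive (face_coeff i \<sigma>)"
  by unfold_locales (simp add: face_coeff_def res_lin_add)

lemma face_coeff_signed: "face_coeff i \<sigma> (signed k v) = signed k (face_coeff i \<sigma> v)"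
  by (simp add: face_coeff_def res_lin_signed)

lemma face_coeff_neg: "face_coeff i \<sigma> (- v) = - face_coeff i \<sigma> v"
  by (simp add: face_coeff_def res_lin_neg)

definition face_op :: "nat \<Rightarrow> nat \<Rightarrow> ('a list \<Rightarrow> 'v) \<Rightarrow> ('a list \<Rightarrow> 'v)" where
  "face_op n i = pushforward (chains P n) (face i) (face_coeff i)"

definition bdry :: "nat \<Rightarrow> ('a list \<Rightarrow> 'v) \<Rightarrow> ('a list \<Rightarrow> 'v)" where
  "bdry n s = (if n = 0 then 0 else (\<lambda>\<tau>. \<Sum>i\<in>{0..n}. signed i (face_op n i s \<tau>)))"

abbreviation S where "S n \<equiv> chain_space P F n"

lemma linear_face_op: "Vector_Spaces.linear (fscale scale) (fscale scale) (face_op n i)"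
  unfolding face_op_def by (rule V.linear_pushforward[OF linear_face_coeff])

lemma linear_bdry: "Vector_Spaces.linear (fscale scale) (fscale scale) (bdry n)"
proof (cases "n = 0")
  case True
  have "bdry n = (\<lambda>s. 0)" using True by (simp add: bdry_def fun_eq_iff)
  then show ?thesis using FP.linear_zero by simp
next
  case False
  have e: "bdry n = (\<lambda>s. \<Sum>i\<in>{0..n}. signed i (face_op n i s))"
    using False by (auto simp: bdry_def fun_eq_iff sum_apply signed_apply)
  show ?thesis unfolding e
    by (rule FP.linear_compose_sum)
      (auto intro: Vector_Spaces.linear_compose[OF linear_face_op FS.linear_signed, unfolded o_def])
qed

text \<open>For \<open>i = 0\<close> and \<open>j = 1\<close> this is the functoriality of the restriction maps.\<close>

lemma face_coeff_face_coeff: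
  assumes \<sigma>: "\<sigma> \<in> chains P (Suc (Suc n))" and ij: "i < j" "j \<le> Suc (Suc n)"
  shows "face_coeff i (face j \<sigma>) (face_coeff j \<sigma> v) = face_coeff (j - 1) (face i \<sigma>) (face_coeff i \<sigma> v)"
proof -
  have len: "length \<sigma> = Suc (Suc (Suc n))" using \<sigma> chainsD by blast
  consider "i \<noteq> 0" | "i = 0" "j = 1" | "i = 0" "2 \<le> j" using ij by linarith
  then show ?thesis
  proof cases
    case 1
    then show ?thesis using ij by (simp add: face_coeff_def)
  next
    case 2
    have le: "\<sigma> ! Suc (Suc 0) \<le> \<sigma> ! Suc 0" "\<sigma> ! Suc 0 \<le> \<sigma> ! 0"
      using chain_nth_le[OF \<sigma>] by auto
    have "face (Suc 0) \<sigma> ! 0 = \<sigma> ! 0" "face (Suc 0) \<sigma> ! Suc 0 = \<sigma> ! Suc (Suc 0)"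
       "face 0 \<sigma> ! 0 = \<sigma> ! Suc 0" "face 0 \<sigma> ! Suc 0 = \<sigma> ! Suc (Suc 0)"
      using len by (auto simp: face_nth)
    then show ?thesis using 2 by (simp add: face_coeff_def res_lin_comp[OF le])
  next
    case 3
    have "face j \<sigma> ! 0 = \<sigma> ! 0" "face j \<sigma> ! Suc 0 = \<sigma> ! Suc 0"
      using len ij 3 by (auto simp: face_nth)
    then show ?thesis using 3 by (simp add: face_coeff_def)
  qed
qed

lemma face_op_face_op:
  assumes ij: "i < j" "j \<le> Suc (Suc n)"
  shows "face_op (Suc n) i (face_op (Suc (Suc n)) j s) \<tau>
    = face_op (Suc n) (j - 1) (face_op (Suc (Suc n)) i s) \<tau>"
proof -
  let ?C = "chains P (Suc (Suc n))"
  have faces: "face k \<sigma> \<in> chains P (Suc n)" if "\<sigma> \<in> ?C" "k \<le> Suc (Suc n)" for \<sigma> k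
    using face_in_chains that by blast
  have L: "face_op (Suc n) i (face_op (Suc (Suc n)) j s) \<tau> =
      (\<Sum>\<sigma>\<in>{\<sigma>\<in>?C. face i (face j \<sigma>) = \<tau>}. face_coeff i (face j \<sigma>) (face_coeff j \<sigma> (s \<sigma>)))"
    unfolding face_op_def pushforward_pushforward[OF finite_chains finite_chains additive_face_coeff]
    using faces ij by (intro sum.cong) auto
  have R: "face_op (Suc n) (j - 1) (face_op (Suc (Suc n)) i s) \<tau> =
      (\<Sum>\<sigma>\<in>{\<sigma>\<in>?C. face (j - 1) (face i \<sigma>) = \<tau>}.
         face_coeff (j - 1) (face i \<sigma>) (face_coeff i \<sigma> (s \<sigma>)))"
    unfolding face_op_def pushforward_pushforward[OF finite_chains finite_chains additive_face_coeff]
    using faces ij by (intro sum.cong) auto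
  have "face i (face j \<sigma>) = face (j - 1) (face i \<sigma>)" if "\<sigma> \<in> ?C" for \<sigma>
    using face_face[OF ij(1), of \<sigma>] ij chainsD[OF that] by simp
  then have "{\<sigma>\<in>?C. face i (face j \<sigma>) = \<tau>} = {\<sigma>\<in>?C. face (j - 1) (face i \<sigma>) = \<tau>}"
    by auto
  then show ?thesis unfolding L R using face_coeff_face_coeff ij by (intro sum.cong) auto
qed

lemma bdry_bdry: "bdry n (bdry (Suc n) s) = 0"
proof (cases n)
  case 0 then show ?thesis by (simp add: bdry_def)
next
  case (Suc m)
  let ?X = "\<lambda>i j. face_op (Suc m) i (face_op (Suc (Suc m)) j s)"
  have "bdry (Suc m) (bdry (Suc (Suc m)) s) \<tau> = 0" for \<tau>
  proof -
    have face_op_sum: "face_op k i (\<lambda>\<tau>'. \<Sum>j\<in>J. signed j (face_op k' j s \<tau>')) \<tau>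
        = (\<Sum>j\<in>J. signed j (face_op k i (face_op k' j s) \<tau>))" for k i k' J
      unfolding face_op_def
      by (simp add: pushforward_sum[OF additive_face_coeff] pushforward_signed[OF additive_face_coeff])
    have "bdry (Suc (Suc m)) s = (\<lambda>\<tau>'. \<Sum>j\<in>{0..Suc (Suc m)}. signed j (face_op (Suc (Suc m)) j s \<tau>'))"
      unfolding bdry_def by (simp del: sum.atLeast0_atMost_Suc)
    moreover have "bdry (Suc m) (bdry (Suc (Suc m)) s) \<tau>
        = (\<Sum>i\<in>{0..Suc m}. signed i (face_op (Suc m) i (bdry (Suc (Suc m)) s) \<tau>))"
      unfolding bdry_def by (simp del: sum.atLeast0_atMost_Suc)
    ultimately have "bdry (Suc m) (bdry (Suc (Suc m)) s) \<tau>
        = (\<Sum>i\<in>{0..Suc m}. signed i (\<Sum>j\<in>{0..Suc (Suc m)}. signed j (?X i j \<tau>)))"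
      by (simp only: face_op_sum)
    also have "\<dots> = (\<Sum>i<Suc (Suc m). \<Sum>j\<le>Suc (Suc m). signed (i + j) (?X i j \<tau>))"
      by (simp add: signed_sum signed_signed atLeast0AtMost lessThan_Suc_atMost
          del: sum.atLeast0_atMost_Suc sum.lessThan_Suc sum.atMost_Suc)
    also have "\<dots> = 0"
      by (rule alternating_double_sum_eq_0) (rule face_op_face_op, auto)
    finally show ?thesis .
  qed
  then show ?thesis using Suc by (auto simp: fun_eq_iff)
qed

end

definition direct_sum :: "'b set \<Rightarrow> ('b \<Rightarrow> 'v::zero set) \<Rightarrow> ('b \<Rightarrow> 'v) set" where
  "direct_sum T G = {s. (\<forall>\<sigma>\<in>T. s \<sigma> \<in> G \<sigma>) \<and> (\<forall>\<sigma>. \<sigma> \<notin> T \<longrightarrow> s \<sigma> = 0)}"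

definition delta :: "'b \<Rightarrow> 'v::zero \<Rightarrow> ('b \<Rightarrow> 'v)" where
  "delta \<sigma> v = (\<lambda>\<tau>. if \<tau> = \<sigma> then v else 0)"

context sheaf_on
begin

lemma linear_delta: "Vector_Spaces.linear scale (fscale scale) (delta \<sigma>)"
  unfolding Vector_Spaces.linear_iff using V.vector_space_axioms FS.vector_space_axioms
  by (auto simp: delta_def fscale_def fun_eq_iff)

lemma linear_eval: "Vector_Spaces.linear (fscale scale) scale (\<lambda>s. s \<sigma>)"
  unfolding Vector_Spaces.linear_iff using V.vector_space_axioms FS.vector_space_axioms
  by (auto simp: fscale_def)

definition fd_subspaces :: "('b \<Rightarrow> 'v set) \<Rightarrow> bool" where
  "fd_subspaces G \<longleftrightarrow> (\<forall>\<sigma>. V.subspace (G \<sigma>) \<and> (\<exists>B. finite B \<and> G \<sigma> \<subseteq> V.span B))"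

lemma fd_subspaces_F: "fd_subspaces (\<lambda>\<sigma>. F (hd \<sigma>))"
  unfolding fd_subspaces_def using subspace_F F_span by (metis order_refl)

lemma subspace_direct_sum:
  fixes G :: "'a list \<Rightarrow> 'v set"
  assumes "fd_subspaces G" shows "FS.subspace (direct_sum T G)"
  using assms unfolding FS.subspace_def direct_sum_def fd_subspaces_def fscale_def
  by (auto intro: V.subspace_0 V.subspace_add V.subspace_scale)

lemma direct_sum_finitely_spanned:
  fixes G :: "'a list \<Rightarrow> 'v set"
  assumes G: "fd_subspaces G" and T: "finite T"
  shows "\<exists>W. finite W \<and> direct_sum T G \<subseteq> FS.span W"
proof -
  define B where "B \<sigma> = (SOME B. finite B \<and> G \<sigma> \<subseteq> V.span B)" for \<sigma>
  have B: "finite (B \<sigma>) \<and> G \<sigma> \<subseteq> V.span (B \<sigma>)" for \<sigma>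
    unfolding B_def using G unfolding fd_subspaces_def by (metis (mono_tags, lifting) someI_ex)
  define W where "W = (\<Union>\<sigma>\<in>T. delta \<sigma> ` B \<sigma>)"
  have fW: "finite W" unfolding W_def using T B by auto
  have "direct_sum T G \<subseteq> FS.span W"
  proof
    fix s assume s: "s \<in> direct_sum T G"
    have e: "s = (\<Sum>\<sigma>\<in>T. delta \<sigma> (s \<sigma>))"
    proof
      fix \<tau>
      have "(\<Sum>\<sigma>\<in>T. delta \<sigma> (s \<sigma>)) \<tau> = (\<Sum>\<sigma>\<in>T. delta \<sigma> (s \<sigma>) \<tau>)" by (rule sum_apply)
      also have "\<dots> = (\<Sum>\<sigma>\<in>T. if \<tau> = \<sigma> then s \<sigma> else 0)" by (simp add: delta_def)
      also have "\<dots> = s \<tau>" using T s by (simp add: direct_sum_def)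
      finally show "s \<tau> = (\<Sum>\<sigma>\<in>T. delta \<sigma> (s \<sigma>)) \<tau>" by simp
    qed
    have "delta \<sigma> (s \<sigma>) \<in> FS.span W" if "\<sigma> \<in> T" for \<sigma>
    proof -
      have "s \<sigma> \<in> V.span (B \<sigma>)" using s that B by (auto simp: direct_sum_def)
      then have "delta \<sigma> (s \<sigma>) \<in> FS.span (delta \<sigma> ` B \<sigma>)"
        using VFP.linear_span_image[OF linear_delta] by auto
      moreover have "FS.span (delta \<sigma> ` B \<sigma>) \<subseteq> FS.span W"
        using that by (intro FS.span_mono) (auto simp: W_def)
      ultimately show ?thesis by auto
    qed
    then show "s \<in> FS.span W" by (subst e) (rule FS.span_sum)
  qed
  then show ?thesis using fW by blast
qed

lemma dim_direct_sum:
  fixes G :: "'a list \<Rightarrow> 'v set"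
  assumes G: "fd_subspaces G" and T: "finite T"
  shows "FS.dim (direct_sum T G) = (\<Sum>\<sigma>\<in>T. V.dim (G \<sigma>))"
  using T
proof (induction T rule: finite_induct)
  case empty
  have "direct_sum {} G = {0}" by (auto simp: direct_sum_def)
  then show ?case using FS.dim_zero_subspace by simp
next
  case (insert x T)
  obtain W where W: "finite W" "direct_sum (insert x T) G \<subseteq> FS.span W"
    using direct_sum_finitely_spanned[OF G] insert by blast
  have rn: "FS.dim (direct_sum (insert x T) G)
      = FS.dim {s\<in>direct_sum (insert x T) G. s x = 0} + V.dim ((\<lambda>s. s x) ` direct_sum (insert x T) G)"
    by (rule FVP.dim_eq_dim_kernel_add_dim_image[OF linear_eval subspace_direct_sum[OF G] W])
  have G0: "\<And>\<sigma>. 0 \<in> G \<sigma>" using G unfolding fd_subspaces_def by (auto intro: V.subspace_0)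
  have k: "{s\<in>direct_sum (insert x T) G. s x = 0} = direct_sum T G"
    using insert G0 unfolding direct_sum_def by (auto, metis)
  have im: "(\<lambda>s. s x) ` direct_sum (insert x T) G = G x"
  proof
    show "(\<lambda>s. s x) ` direct_sum (insert x T) G \<subseteq> G x" by (auto simp: direct_sum_def)
    show "G x \<subseteq> (\<lambda>s. s x) ` direct_sum (insert x T) G"
    proof
      fix v assume v: "v \<in> G x"
      have "delta x v \<in> direct_sum (insert x T) G"
        using v G unfolding direct_sum_def delta_def fd_subspaces_def by (auto intro: V.subspace_0)
      moreover have "delta x v x = v" by (simp add: delta_def)
      ultimately show "v \<in> (\<lambda>s. s x) ` direct_sum (insert x T) G" by (metis image_eqI)
    qed
  qed
  show ?case using rn k im insert by simp
qed

lemma S_eq_direct_sum: "S n = direct_sum (chains P n) (\<lambda>\<sigma>. F (hd \<sigma>))"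
  by (auto simp: chain_space_def direct_sum_def)

lemma subspace_S: "FS.subspace (S n)"
  unfolding S_eq_direct_sum by (rule subspace_direct_sum[OF fd_subspaces_F])

lemma S_finitely_spanned: "\<exists>W. finite W \<and> S n \<subseteq> FS.span W"
  unfolding S_eq_direct_sum by (rule direct_sum_finitely_spanned[OF fd_subspaces_F finite_chains])

lemma S_0: "0 \<in> S n" using FS.subspace_0[OF subspace_S] .

lemma S_memD: "s \<in> S n \<Longrightarrow> \<sigma> \<in> chains P n \<Longrightarrow> s \<sigma> \<in> F (hd \<sigma>)"
  "s \<in> S n \<Longrightarrow> \<sigma> \<notin> chains P n \<Longrightarrow> s \<sigma> = 0"
  by (auto simp: chain_space_def)

lemma bdry_in_S:
  assumes s: "s \<in> S n"
  shows "bdry n s \<in> S (n - 1)"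
proof (cases n)
  case 0 then show ?thesis using S_0 by (simp add: bdry_def)
next
  case (Suc m)
  have "bdry (Suc m) s \<in> S m"
    unfolding chain_space_def
  proof (intro CollectI allI conjI impI)
    fix \<tau>
    have expand: "bdry (Suc m) s \<tau> = (\<Sum>i\<in>{0..Suc m}.
        signed i (\<Sum>\<sigma>\<in>{\<sigma>\<in>chains P (Suc m). face i \<sigma> = \<tau>}. face_coeff i \<sigma> (s \<sigma>)))"
      unfolding bdry_def face_op_def pushforward_def by (simp del: sum.atLeast0_atMost_Suc)
    show "bdry (Suc m) s \<tau> = 0" if t: "\<tau> \<notin> chains P m"
    proof -
      have no_faces: "{\<sigma>\<in>chains P (Suc m). face i \<sigma> = \<tau>} = {}" if "i \<in> {0..Suc m}" for i
        using face_in_chains[of _ P m i] t that by auto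
      show ?thesis unfolding expand by (intro sum.neutral ballI) (simp add: no_faces)
    qed
    show "bdry (Suc m) s \<tau> \<in> F (hd \<tau>)" if t: "\<tau> \<in> chains P m"
      unfolding expand
    proof (intro F_sum F_signed)
      fix i \<sigma> assume i: "i \<in> {0..Suc m}" and \<sigma>: "\<sigma> \<in> {\<sigma>\<in>chains P (Suc m). face i \<sigma> = \<tau>}"
      then have \<sigma>: "\<sigma> \<in> chains P (Suc m)" "face i \<sigma> = \<tau>" by auto
      then have "hd \<tau> = (if i = 0 then \<sigma> ! 1 else \<sigma> ! 0)"
        using chain_hd_conv_nth[OF t] chainsD[OF \<sigma>(1)] i by (auto simp: face_nth)
      moreover have "s \<sigma> \<in> F (\<sigma> ! 0)"
        using S_memD(1)[OF s[unfolded Suc] \<sigma>(1)] chain_hd_conv_nth[OF \<sigma>(1)] by simp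
      ultimately show "face_coeff i \<sigma> (s \<sigma>) \<in> F (hd \<tau>)" by (auto simp: face_coeff_def res_lin_in)
    qed
  qed
  then show ?thesis using Suc by simp
qed

lemma boundary_eq_bdry: assumes s: "s \<in> S n" shows "boundary P res n s = bdry n s"
proof (cases n)
  case 0 then show ?thesis by (simp add: boundary_def bdry_def fun_eq_iff)
next
  case (Suc m)
  show ?thesis
  proof
    fix \<tau>
    have r: "res (\<sigma> ! 0) (\<sigma> ! Suc 0) (s \<sigma>) = face_coeff 0 \<sigma> (s \<sigma>)" if "\<sigma> \<in> chains P n" for \<sigma>
    proof -
      have "\<sigma> ! 1 \<le> \<sigma> ! 0" using chain_nth_le[OF that, of 0 1] Suc by simp
      moreover have "s \<sigma> \<in> F (\<sigma> ! 0)" using S_memD(1)[OF s that] chain_hd_conv_nth[OF that] by simp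
      ultimately show ?thesis by (simp add: face_coeff_def res_lin_eq)
    qed
    have "bdry n s \<tau> = signed 0 (face_op n 0 s \<tau>) + (\<Sum>i\<in>{Suc 0..n}. signed i (face_op n i s \<tau>))"
      unfolding bdry_def using Suc by (simp add: sum.atLeast_Suc_atMost del: sum.atLeast0_atMost_Suc)
    also have "signed 0 (face_op n 0 s \<tau>) = (\<Sum>\<sigma>\<in>{\<sigma>\<in>chains P n. face 0 \<sigma> = \<tau>}. res (\<sigma> ! 0) (\<sigma> ! 1) (s \<sigma>))"
      unfolding signed_def face_op_def pushforward_def by (auto intro!: sum.cong simp: r)
    also have "(\<Sum>i\<in>{Suc 0..n}. signed i (face_op n i s \<tau>)) = (\<Sum>i\<in>{1..n}. \<Sum>\<sigma>\<in>{\<sigma>\<in>chains P n. face i \<sigma> = \<tau>}.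
            (if even i then s \<sigma> else - s \<sigma>))"
      by (intro sum.cong) (auto simp: signed_def face_op_def pushforward_def face_coeff_def sum_negf)
    finally show "boundary P res n s \<tau> = bdry n s \<tau>" using Suc by (simp add: boundary_def)
  qed
qed

section \<open>The contracting homotopy of the degenerate part\<close>

definition degenerate_chains :: "nat \<Rightarrow> 'a list set" where
  "degenerate_chains n = {\<sigma>\<in>chains P n. \<not> distinct \<sigma>}"

definition htpy :: "nat \<Rightarrow> ('a list \<Rightarrow> 'v) \<Rightarrow> ('a list \<Rightarrow> 'v)" where
  "htpy n = pushforward (degenerate_chains n)
     (\<lambda>\<sigma>. degeneracy (first_repeat \<sigma>) \<sigma>) (\<lambda>\<sigma>. signed (first_repeat \<sigma>))"

definition nondeg :: "('a list \<Rightarrow> 'v) \<Rightarrow> ('a list \<Rightarrow> 'v)" where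
  "nondeg s = (\<lambda>\<sigma>. if distinct \<sigma> then s \<sigma> else 0)"

lemma degenerate_chain_if_degenerate_chains:
  "\<sigma> \<in> degenerate_chains n \<Longrightarrow> degenerate_chain P n \<sigma>"
  by unfold_locales (auto simp: degenerate_chains_def)

lemma finite_degenerate_chains: "finite (degenerate_chains n)"
  unfolding degenerate_chains_def by (rule finite_subset[OF _ finite_chains]) auto

lemma degenerate_chains_0: "degenerate_chains 0 = {}"
  by (auto simp: degenerate_chains_def chains_def length_Suc_conv)

lemma linear_htpy: "Vector_Spaces.linear (fscale scale) (fscale scale) (htpy n)"
  unfolding htpy_def by (rule V.linear_pushforward[OF V.linear_signed])

lemma linear_nondeg: "Vector_Spaces.linear (fscale scale) (fscale scale) nondeg"
  unfolding Vector_Spaces.linear_iff using FS.vector_space_axioms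
  by (auto simp: fscale_def nondeg_def fun_eq_iff)

lemma htpy_in_S:
  assumes s: "s \<in> S n"
  shows "htpy n s \<in> S (Suc n)"
  unfolding chain_space_def
proof (intro CollectI allI conjI impI)
  fix \<tau>
  have degeneracy: "degeneracy (first_repeat \<sigma>) \<sigma> \<in> chains P (Suc n)"
    "hd (degeneracy (first_repeat \<sigma>) \<sigma>) = hd \<sigma>" if "\<sigma> \<in> degenerate_chains n" for \<sigma>
    using degenerate_chain.degeneracy_in_chains_at_repeat degenerate_chain.hd_degeneracy_at_repeat
      degenerate_chain_if_degenerate_chains[OF that] by blast+
  show "htpy n s \<tau> = 0" if "\<tau> \<notin> chains P (Suc n)"
  proof -
    have "{\<sigma>\<in>degenerate_chains n. degeneracy (first_repeat \<sigma>) \<sigma> = \<tau>} = {}"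
      using degeneracy that by auto
    then show ?thesis by (simp only: htpy_def pushforward_def sum.empty)
  qed
  show "htpy n s \<tau> \<in> F (hd \<tau>)" unfolding htpy_def pushforward_def
  proof (intro F_sum)
    fix \<sigma> assume \<sigma>: "\<sigma> \<in> {\<sigma>\<in>degenerate_chains n. degeneracy (first_repeat \<sigma>) \<sigma> = \<tau>}"
    then have "s \<sigma> \<in> F (hd \<sigma>)" using S_memD(1)[OF s] by (auto simp: degenerate_chains_def)
    then show "signed (first_repeat \<sigma>) (s \<sigma>) \<in> F (hd \<tau>)" using \<sigma> degeneracy F_signed by auto
  qed
qed

lemma nondeg_in_S: "s \<in> S n \<Longrightarrow> nondeg s \<in> S n"
  by (auto simp: chain_space_def nondeg_def F_0)

end

text \<open>For a degenerate chain \<open>\<sigma>\<close> with first repetition at \<open>p\<close>, the terms of \<open>(d h + h d) \<sigma>\<close>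
  cancel in pairs by the simplicial identities \<open>d\<^sub>i s\<^sub>p = s\<^sub>p\<^sub>-\<^sub>1 d\<^sub>i\<close> for \<open>i < p\<close> and
  \<open>d\<^sub>i\<^sub>+\<^sub>1 s\<^sub>p = s\<^sub>p d\<^sub>i\<close> for \<open>i > p + 1\<close>, and by \<open>d\<^sub>p \<sigma> = d\<^sub>p\<^sub>+\<^sub>1 \<sigma>\<close>; of the three faces
  \<open>d\<^sub>p s\<^sub>p \<sigma> = d\<^sub>p\<^sub>+\<^sub>1 s\<^sub>p \<sigma> = d\<^sub>p\<^sub>+\<^sub>2 s\<^sub>p \<sigma> = \<sigma>\<close> two cancel and one survives.\<close>

locale sheaf_degenerate_chain = sheaf_on scale F res P + degenerate_chain P "Suc m" xs
  for scale :: "'k::field \<Rightarrow> 'v::ab_group_add \<Rightarrow> 'v" and F :: "'a::{finite,order} \<Rightarrow> 'v set"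
    and res :: "'a \<Rightarrow> 'a \<Rightarrow> 'v \<Rightarrow> 'v" and P :: "'a set" and m :: nat and xs :: "'a list"
begin

definition bdry_htpy_term :: "'a list \<Rightarrow> 'v \<Rightarrow> nat \<Rightarrow> 'v" where
  "bdry_htpy_term \<tau> v i = signed i
     (if face i (degeneracy p xs) = \<tau> then face_coeff i (degeneracy p xs) (signed p v) else 0)"

definition htpy_bdry_term :: "'a list \<Rightarrow> 'v \<Rightarrow> nat \<Rightarrow> 'v" where
  "htpy_bdry_term \<tau> v i = signed i
     (if face i xs \<in> degenerate_chains m \<and> degeneracy (first_repeat (face i xs)) (face i xs) = \<tau>
      then signed (first_repeat (face i xs)) (face_coeff i xs v) else 0)"

lemma terms_cancel_below:
  assumes i: "i < p"
  shows "bdry_htpy_term \<tau> v i + htpy_bdry_term \<tau> v i = 0"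
proof -
  have p: "p \<le> m" using repeat_props(1) by simp
  have face: "face i xs \<in> degenerate_chains m"
    using face_in_chains[OF ch, of i] not_distinct_face_below[OF i] i p
    by (simp add: degenerate_chains_def)
  have "degeneracy p xs ! 0 = xs ! 0" "degeneracy p xs ! Suc 0 = xs ! Suc 0"
    using i length_xs p by (auto simp: degeneracy_nth)
  then have coeff: "face_coeff i (degeneracy p xs) w = face_coeff i xs w" for w
    by (simp add: face_coeff_def)
  have sign: "signed p w = - signed (p - 1) w" for w :: 'v
    using i by (cases p) (auto simp: signed_def)
  have "bdry_htpy_term \<tau> v i = signed i (if degeneracy (p - 1) (face i xs) = \<tau>
      then - signed (p - 1) (face_coeff i xs v) else 0)"
    unfolding bdry_htpy_term_def face_degeneracy_below[OF i] coeff
    by (simp add: face_coeff_signed sign face_coeff_neg)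
  moreover have "htpy_bdry_term \<tau> v i = signed i (if degeneracy (p - 1) (face i xs) = \<tau>
      then signed (p - 1) (face_coeff i xs v) else 0)"
    unfolding htpy_bdry_term_def first_repeat_face_below[OF i] using face by simp
  ultimately show ?thesis by (simp add: signed_def)
qed

lemma terms_cancel_above:
  assumes i: "Suc (Suc p) \<le> i" "i \<le> Suc m"
  shows "bdry_htpy_term \<tau> v (Suc i) + htpy_bdry_term \<tau> v i = 0"
proof -
  have face: "face i xs \<in> degenerate_chains m"
    using face_in_chains[OF ch i(2)] not_distinct_face_above[OF i] by (simp add: degenerate_chains_def)
  have coeff: "face_coeff (Suc i) (degeneracy p xs) w = w" "face_coeff i xs w = w" for w
    using i by (auto simp: face_coeff_def)
  have "bdry_htpy_term \<tau> v (Suc i)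
      = signed (Suc i) (if degeneracy p (face i xs) = \<tau> then signed p v else 0)"
    unfolding bdry_htpy_term_def face_degeneracy_above[OF i] coeff ..
  moreover have "htpy_bdry_term \<tau> v i = signed i (if degeneracy p (face i xs) = \<tau> then signed p v else 0)"
    unfolding htpy_bdry_term_def first_repeat_face_above[OF i] coeff using face by simp
  ultimately show ?thesis by (simp add: signed_def)
qed

lemma htpy_bdry_terms_cancel_at_repeat:
  assumes v: "v \<in> F (xs ! 0)"
  shows "htpy_bdry_term \<tau> v p + htpy_bdry_term \<tau> v (Suc p) = 0"
proof -
  have "face_coeff p xs v = face_coeff (Suc p) xs v"
  proof (cases "p = 0")
    case True
    then have "xs ! 0 = xs ! Suc 0" using repeat_props(2) by simp
    then show ?thesis using True v by (simp add: face_coeff_def res_lin_id)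
  qed (simp add: face_coeff_def)
  then show ?thesis unfolding htpy_bdry_term_def face_at_repeat by (simp add: signed_def)
qed

lemma bdry_htpy_terms_at_repeat:
  assumes v: "v \<in> F (xs ! 0)"
  shows "bdry_htpy_term \<tau> v p + bdry_htpy_term \<tau> v (Suc p) + bdry_htpy_term \<tau> v (Suc (Suc p))
    = (if xs = \<tau> then v else 0)"
proof -
  have coeff: "face_coeff p (degeneracy p xs) (signed p v) = signed p v"
  proof (cases "p = 0")
    case True
    have "degeneracy p xs ! 0 = xs ! 0" "degeneracy p xs ! Suc 0 = xs ! 0"
      using True length_xs by (auto simp: degeneracy_nth)
    then show ?thesis using True F_signed[OF v] by (simp add: face_coeff_def res_lin_id)
  qed (simp add: face_coeff_def)
  have "bdry_htpy_term \<tau> v p = signed p (if xs = \<tau> then signed p v else 0)"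
    unfolding bdry_htpy_term_def face_degeneracy_at coeff ..
  moreover have "bdry_htpy_term \<tau> v (Suc p) = signed (Suc p) (if xs = \<tau> then signed p v else 0)"
    "bdry_htpy_term \<tau> v (Suc (Suc p)) = signed (Suc (Suc p)) (if xs = \<tau> then signed p v else 0)"
    unfolding bdry_htpy_term_def face_Suc_degeneracy_at face_Suc_Suc_degeneracy_at
    by (simp_all add: face_coeff_def)
  ultimately show ?thesis by (simp add: signed_def)
qed

lemma bdry_htpy_add_htpy_bdry_terms:
  assumes v: "v \<in> F (xs ! 0)"
  shows "(\<Sum>i\<in>{0..Suc (Suc m)}. bdry_htpy_term \<tau> v i) + (\<Sum>i\<in>{0..Suc m}. htpy_bdry_term \<tau> v i)
    = (if xs = \<tau> then v else 0)"
proof -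
  let ?A = "bdry_htpy_term \<tau> v" and ?B = "htpy_bdry_term \<tau> v"
  have p: "p \<le> m" using repeat_props(1) by simp
  have below: "(\<Sum>i\<in>{0..<p}. ?A i) + (\<Sum>i\<in>{0..<p}. ?B i) = 0"
    unfolding sum.distrib[symmetric] by (rule sum.neutral) (use terms_cancel_below in auto)
  have above: "(\<Sum>i\<in>{Suc (Suc p)..<Suc (Suc m)}. ?A (Suc i)) + (\<Sum>i\<in>{Suc (Suc p)..<Suc (Suc m)}. ?B i) = 0"
    unfolding sum.distrib[symmetric] by (rule sum.neutral) (use terms_cancel_above in auto)
  show ?thesis
    using sum_split_three[of p "Suc (Suc m)" ?A] sum_split_two[of p "Suc m" ?B] p below above
      htpy_bdry_terms_cancel_at_repeat[OF v] bdry_htpy_terms_at_repeat[OF v]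
    by (simp add: algebra_simps)
qed

end

context sheaf_on
begin

lemma bdry_htpy_add_htpy_bdry_terms:
  assumes ch: "\<sigma> \<in> chains P (Suc m)" and v: "v \<in> F (\<sigma> ! 0)"
  shows "(\<Sum>i\<in>{0..Suc (Suc m)}. signed i
          (if \<sigma> \<in> degenerate_chains (Suc m) \<and> face i (degeneracy (first_repeat \<sigma>) \<sigma>) = \<tau>
           then face_coeff i (degeneracy (first_repeat \<sigma>) \<sigma>) (signed (first_repeat \<sigma>) v) else 0))
       + (\<Sum>i\<in>{0..Suc m}. signed i
          (if face i \<sigma> \<in> degenerate_chains m \<and> degeneracy (first_repeat (face i \<sigma>)) (face i \<sigma>) = \<tau>
           then signed (first_repeat (face i \<sigma>)) (face_coeff i \<sigma> v) else 0))
       = (if \<sigma> \<in> degenerate_chains (Suc m) \<and> \<sigma> = \<tau> then v else 0)"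
proof (cases "distinct \<sigma>")
  case True
  then have "face i \<sigma> \<notin> degenerate_chains m" if "i \<in> {0..Suc m}" for i
    using distinct_face[OF True] that chainsD[OF ch] by (auto simp: degenerate_chains_def)
  moreover have "\<sigma> \<notin> degenerate_chains (Suc m)" using True by (simp add: degenerate_chains_def)
  ultimately show ?thesis by simp
next
  case False
  then have \<sigma>: "\<sigma> \<in> degenerate_chains (Suc m)" using ch by (simp add: degenerate_chains_def)
  interpret sheaf_degenerate_chain scale F res P m \<sigma>
    by (rule sheaf_degenerate_chain.intro[OF sheaf_on_axioms degenerate_chain_if_degenerate_chains[OF \<sigma>]])
  show ?thesis
    using bdry_htpy_add_htpy_bdry_terms[OF v, of \<tau>] \<sigma>
    unfolding bdry_htpy_term_def htpy_bdry_term_def by simp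
qed

lemma face_op_htpy:
  "face_op (Suc (Suc m)) i (htpy (Suc m) s) \<tau> =
     (\<Sum>\<sigma>\<in>chains P (Suc m). if \<sigma> \<in> degenerate_chains (Suc m) \<and> face i (degeneracy (first_repeat \<sigma>) \<sigma>) = \<tau>
        then face_coeff i (degeneracy (first_repeat \<sigma>) \<sigma>) (signed (first_repeat \<sigma>) (s \<sigma>)) else 0)"
proof -
  have "degeneracy (first_repeat \<sigma>) \<sigma> \<in> chains P (Suc (Suc m))" if "\<sigma> \<in> degenerate_chains (Suc m)" for \<sigma>
    using degenerate_chain.degeneracy_in_chains_at_repeat degenerate_chain_if_degenerate_chains[OF that] .
  then have "face_op (Suc (Suc m)) i (htpy (Suc m) s) \<tau> =
      (\<Sum>\<sigma>\<in>{\<sigma>\<in>chains P (Suc m).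
          \<sigma> \<in> degenerate_chains (Suc m) \<and> face i (degeneracy (first_repeat \<sigma>) \<sigma>) = \<tau>}.
         face_coeff i (degeneracy (first_repeat \<sigma>) \<sigma>) (signed (first_repeat \<sigma>) (s \<sigma>)))"
    unfolding face_op_def htpy_def
      pushforward_pushforward[OF finite_degenerate_chains finite_chains additive_face_coeff]
    by (intro sum.cong) (auto simp: degenerate_chains_def)
  then show ?thesis by (simp only: sum.inter_filter[OF finite_chains])
qed

lemma htpy_face_op:
  "htpy m (face_op (Suc m) i s) \<tau> =
     (\<Sum>\<sigma>\<in>chains P (Suc m).
        if face i \<sigma> \<in> degenerate_chains m \<and> degeneracy (first_repeat (face i \<sigma>)) (face i \<sigma>) = \<tau>
        then signed (first_repeat (face i \<sigma>)) (face_coeff i \<sigma> (s \<sigma>)) else 0)"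
  unfolding face_op_def htpy_def
    pushforward_pushforward[OF finite_chains finite_degenerate_chains additive_signed]
  by (rule sum.inter_filter[OF finite_chains])

lemma nondeg_S_0:
  assumes s: "s \<in> S 0"
  shows "nondeg s = s"
proof
  fix \<sigma>
  show "nondeg s \<sigma> = s \<sigma>"
  proof (cases "\<sigma> \<in> chains P 0")
    case True
    then have "distinct \<sigma>" by (auto simp: chains_def length_Suc_conv)
    then show ?thesis by (simp add: nondeg_def)
  qed (use S_memD(2)[OF s] in \<open>simp add: nondeg_def\<close>)
qed

lemma htpy_vertices: "htpy 0 t = 0"
  by (simp add: htpy_def pushforward_def degenerate_chains_0 fun_eq_iff)

lemma chain_homotopy:
  assumes s: "s \<in> S n"
  shows "bdry (Suc n) (htpy n s) + htpy (n - 1) (bdry n s) = s - nondeg s"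
proof (cases n)
  case 0
  then show ?thesis
    using nondeg_S_0[OF s[unfolded 0]] htpy_vertices FP.linear_0[OF linear_bdry] by simp
next
  case (Suc m)
  let ?C = "chains P (Suc m)"
  have "bdry (Suc (Suc m)) (htpy (Suc m) s) \<tau> + htpy m (bdry (Suc m) s) \<tau> = s \<tau> - nondeg s \<tau>" for \<tau>
  proof -
    have "bdry (Suc m) s = (\<lambda>\<tau>'. \<Sum>i\<in>{0..Suc m}. signed i (face_op (Suc m) i s \<tau>'))"
      unfolding bdry_def by (simp del: sum.atLeast0_atMost_Suc)
    then have "htpy m (bdry (Suc m) s) \<tau> = (\<Sum>i\<in>{0..Suc m}. signed i (htpy m (face_op (Suc m) i s) \<tau>))"
      unfolding htpy_def
      by (simp only: pushforward_sum[OF additive_signed] pushforward_signed[OF additive_signed])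
    moreover have "bdry (Suc (Suc m)) (htpy (Suc m) s) \<tau>
        = (\<Sum>i\<in>{0..Suc (Suc m)}. signed i (face_op (Suc (Suc m)) i (htpy (Suc m) s) \<tau>))"
      unfolding bdry_def by (simp del: sum.atLeast0_atMost_Suc)
    ultimately have "bdry (Suc (Suc m)) (htpy (Suc m) s) \<tau> + htpy m (bdry (Suc m) s) \<tau> =
      (\<Sum>\<sigma>\<in>?C. (\<Sum>i\<in>{0..Suc (Suc m)}. signed i
          (if \<sigma> \<in> degenerate_chains (Suc m) \<and> face i (degeneracy (first_repeat \<sigma>) \<sigma>) = \<tau>
           then face_coeff i (degeneracy (first_repeat \<sigma>) \<sigma>) (signed (first_repeat \<sigma>) (s \<sigma>)) else 0))
        + (\<Sum>i\<in>{0..Suc m}. signed i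
          (if face i \<sigma> \<in> degenerate_chains m \<and> degeneracy (first_repeat (face i \<sigma>)) (face i \<sigma>) = \<tau>
           then signed (first_repeat (face i \<sigma>)) (face_coeff i \<sigma> (s \<sigma>)) else 0)))"
      unfolding face_op_htpy htpy_face_op signed_sum
      by (simp only: sum.swap[of _ "{0..Suc (Suc m)}"] sum.swap[of _ "{0..Suc m}"] sum.distrib)
    also have "\<dots> = (\<Sum>\<sigma>\<in>?C. if \<sigma> \<in> degenerate_chains (Suc m) \<and> \<sigma> = \<tau> then s \<sigma> else 0)"
      using S_memD(1)[OF s[unfolded Suc]]
      by (intro sum.cong refl bdry_htpy_add_htpy_bdry_terms) (auto simp: chain_hd_conv_nth[symmetric])
    also have "\<dots> = (\<Sum>\<sigma>\<in>?C. if \<tau> = \<sigma> then (if \<sigma> \<in> degenerate_chains (Suc m) then s \<sigma> else 0) else 0)"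
      by (rule sum.cong) auto
    also have "\<dots> = s \<tau> - nondeg s \<tau>"
      using S_memD(2)[OF s[unfolded Suc]]
      by (auto simp: sum.delta'[OF finite_chains] degenerate_chains_def nondeg_def)
    finally show ?thesis .
  qed
  then show ?thesis using Suc by (simp add: fun_eq_iff)
qed

section \<open>Splitting off the degenerate part\<close>

lemma nondeg_idem: "nondeg (nondeg s) = nondeg s" by (simp add: nondeg_def fun_eq_iff)

lemma nondeg_0: "nondeg 0 = 0" by (simp add: nondeg_def fun_eq_iff)

lemma bdry_0: "bdry n 0 = 0" using FP.linear_0[OF linear_bdry] .
lemma htpy_0: "htpy n 0 = 0" using FP.linear_0[OF linear_htpy] .

lemma nondeg_bdry_nondeg:
  assumes t: "t \<in> S n" "nondeg t = t"
  shows "nondeg (bdry n t) = bdry n t"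
proof (cases n)
  case 0 then show ?thesis by (simp add: bdry_def nondeg_0)
next
  case (Suc m)
  have "bdry n t \<tau> = 0" if nd: "\<not> distinct \<tau>" for \<tau>
  proof -
    have "face_op n i t \<tau> = 0" if "i \<in> {0..n}" for i
      unfolding face_op_def pushforward_def
    proof (intro sum.neutral ballI)
      fix \<sigma> assume \<sigma>: "\<sigma> \<in> {\<sigma>\<in>chains P n. face i \<sigma> = \<tau>}"
      have "\<not> distinct \<sigma>"
      proof
        assume "distinct \<sigma>"
        moreover have "i < length \<sigma>" using \<sigma> that chainsD[of \<sigma> P n] by auto
        ultimately have "distinct (face i \<sigma>)" using distinct_face[of \<sigma> i] by blast
        then show False using \<sigma> nd by simp
      qed
      then have "t \<sigma> = 0" using t(2) by (metis nondeg_def)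
      then show "face_coeff i \<sigma> (t \<sigma>) = 0" using additive.zero[OF additive_face_coeff] by simp
    qed
    then have "(\<Sum>i\<in>{0..n}. signed i (face_op n i t \<tau>)) = 0"
      by (intro sum.neutral ballI) (simp add: signed_def)
    then show ?thesis unfolding bdry_def using Suc by (simp del: sum.atLeast0_atMost_Suc)
  qed
  then show ?thesis by (auto simp: nondeg_def fun_eq_iff)
qed

text \<open>From \<open>t = d h t + h d t\<close> we get \<open>d t = d h (d t)\<close>, while the homotopy identity for \<open>d t\<close>
  gives \<open>d h (d t) = d t - nondeg (d t)\<close>.\<close>

lemma nondeg_bdry_degenerate:
  assumes t: "t \<in> S n" "nondeg t = 0"
  shows "nondeg (bdry n t) = 0"
proof (cases n)
  case 0 then show ?thesis by (simp add: bdry_def nondeg_0)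
next
  case (Suc m)
  let ?u = "bdry n t"
  have h1: "bdry (Suc n) (htpy n t) + htpy (n - 1) ?u = t"
    using chain_homotopy[OF t(1)] t(2) by simp
  have "?u = bdry n (bdry (Suc n) (htpy n t)) + bdry n (htpy (n - 1) ?u)"
    using FP.linear_add[OF linear_bdry, of n "bdry (Suc n) (htpy n t)" "htpy (n - 1) ?u"] h1 by simp
  then have u1: "?u = bdry n (htpy (n - 1) ?u)" using bdry_bdry by simp
  have uS: "?u \<in> S m" using bdry_in_S[OF t(1)] Suc by simp
  have h2: "bdry (Suc m) (htpy m ?u) + htpy (m - 1) (bdry m ?u) = ?u - nondeg ?u"
    by (rule chain_homotopy[OF uS])
  have "bdry m ?u = 0" using bdry_bdry[of m] Suc by simp
  then have "bdry n (htpy (n - 1) ?u) = ?u - nondeg ?u" using h2 Suc htpy_0 by simp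
  then have e: "?u - nondeg ?u = ?u" using u1 by simp
  have "nondeg ?u = ?u - (?u - nondeg ?u)" by simp
  also have "\<dots> = 0" unfolding e by simp
  finally show ?thesis .
qed

lemma nondeg_bdry:
  assumes s: "s \<in> S n"
  shows "nondeg (bdry n s) = bdry n (nondeg s)"
proof -
  have a: "bdry n s = bdry n (nondeg s) + bdry n (s - nondeg s)"
    using FP.linear_add[OF linear_bdry, of n "nondeg s" "s - nondeg s"] by simp
  have b: "s - nondeg s \<in> S n" using FS.subspace_diff[OF subspace_S s nondeg_in_S[OF s]] .
  have c: "nondeg (s - nondeg s) = 0" by (simp add: nondeg_def fun_eq_iff)
  have "nondeg (bdry n s) = nondeg (bdry n (nondeg s)) + nondeg (bdry n (s - nondeg s))"
    unfolding a using FP.linear_add[OF linear_nondeg] by simp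
  also have "\<dots> = bdry n (nondeg s)"
    using nondeg_bdry_nondeg[OF nondeg_in_S[OF s] nondeg_idem] nondeg_bdry_degenerate[OF b c] by simp
  finally show ?thesis .
qed

definition cycles :: "nat \<Rightarrow> ('a list \<Rightarrow> 'v) set" where
  "cycles n = {s\<in>S n. bdry n s = 0}"

definition boundaries :: "nat \<Rightarrow> ('a list \<Rightarrow> 'v) set" where
  "boundaries n = bdry (Suc n) ` S (Suc n)"

definition normalized :: "nat \<Rightarrow> ('a list \<Rightarrow> 'v) set" where
  "normalized n = {s\<in>S n. nondeg s = s}"

definition normalized_cycles :: "nat \<Rightarrow> ('a list \<Rightarrow> 'v) set" where
  "normalized_cycles n = {s\<in>S n. nondeg s = s \<and> bdry n s = 0}"

definition normalized_boundaries :: "nat \<Rightarrow> ('a list \<Rightarrow> 'v) set" where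
  "normalized_boundaries n = bdry n ` normalized n"

definition degenerate_cycles :: "nat \<Rightarrow> ('a list \<Rightarrow> 'v) set" where
  "degenerate_cycles n = {s\<in>S n. nondeg s = 0 \<and> bdry n s = 0}"

lemma normalized_eq_direct_sum: "normalized n = direct_sum {\<sigma>\<in>chains P n. distinct \<sigma>} (\<lambda>\<sigma>. F (hd \<sigma>))"
proof (intro set_eqI iffI)
  fix s assume "s \<in> normalized n"
  then have s: "s \<in> S n" "nondeg s = s" by (auto simp: normalized_def)
  have "s \<sigma> = 0" if "\<not> distinct \<sigma>" for \<sigma>
    using s(2) that by (metis nondeg_def)
  then show "s \<in> direct_sum {\<sigma>\<in>chains P n. distinct \<sigma>} (\<lambda>\<sigma>. F (hd \<sigma>))"
    using s(1) unfolding S_eq_direct_sum direct_sum_def by auto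
next
  fix s assume s: "s \<in> direct_sum {\<sigma>\<in>chains P n. distinct \<sigma>} (\<lambda>\<sigma>. F (hd \<sigma>))"
  have "s \<in> S n" unfolding S_eq_direct_sum direct_sum_def
  proof (intro CollectI conjI allI ballI impI)
    fix \<sigma> assume "\<sigma> \<in> chains P n"
    then show "s \<sigma> \<in> F (hd \<sigma>)" using s F_0 unfolding direct_sum_def by (cases "distinct \<sigma>") auto
  next
    fix \<sigma> assume "\<sigma> \<notin> chains P n"
    then show "s \<sigma> = 0" using s unfolding direct_sum_def by auto
  qed
  moreover have "nondeg s = s"
  proof
    fix \<sigma> show "nondeg s \<sigma> = s \<sigma>" using s unfolding direct_sum_def nondeg_def by auto
  qed
  ultimately show "s \<in> normalized n" by (simp add: normalized_def)
qed

lemma subspace_normalized: "FS.subspace (normalized n)"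
  unfolding normalized_eq_direct_sum by (rule subspace_direct_sum[OF fd_subspaces_F])

lemma normalized_finitely_spanned: "\<exists>W. finite W \<and> normalized n \<subseteq> FS.span W"
  unfolding normalized_eq_direct_sum
  by (rule direct_sum_finitely_spanned[OF fd_subspaces_F]) (rule finite_subset[OF _ finite_chains], auto)

lemma nondeg_image_cycles: "nondeg ` cycles n = normalized_cycles n"
proof
  show "nondeg ` cycles n \<subseteq> normalized_cycles n"
  proof
    fix x assume "x \<in> nondeg ` cycles n"
    then obtain s where s: "s \<in> S n" "bdry n s = 0" "x = nondeg s" by (auto simp: cycles_def)
    have "bdry n x = 0" using nondeg_bdry[OF s(1)] s nondeg_0 by simp
    then show "x \<in> normalized_cycles n"
      using s nondeg_in_S[OF s(1)] nondeg_idem by (simp add: normalized_cycles_def)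
  qed
  show "normalized_cycles n \<subseteq> nondeg ` cycles n"
  proof
    fix x assume "x \<in> normalized_cycles n"
    then have "x \<in> cycles n" "x = nondeg x" by (auto simp: normalized_cycles_def cycles_def)
    then show "x \<in> nondeg ` cycles n" by blast
  qed
qed

lemma degenerate_boundaries: "{x\<in>boundaries n. nondeg x = 0} = degenerate_cycles n"
proof
  show "{x\<in>boundaries n. nondeg x = 0} \<subseteq> degenerate_cycles n"
    using bdry_in_S bdry_bdry by (fastforce simp: boundaries_def degenerate_cycles_def)
  show "degenerate_cycles n \<subseteq> {x\<in>boundaries n. nondeg x = 0}"
  proof
    fix z assume "z \<in> degenerate_cycles n"
    then have z: "z \<in> S n" "nondeg z = 0" "bdry n z = 0" by (auto simp: degenerate_cycles_def)
    have "bdry (Suc n) (htpy n z) = z" using chain_homotopy[OF z(1)] z htpy_0 bdry_0 by simp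
    then show "z \<in> {x\<in>boundaries n. nondeg x = 0}"
      using htpy_in_S[OF z(1)] z(2) unfolding boundaries_def
      by (metis (mono_tags, lifting) image_eqI mem_Collect_eq)
  qed
qed

lemma nondeg_image_boundaries: "nondeg ` boundaries n = normalized_boundaries (Suc n)"
proof
  show "nondeg ` boundaries n \<subseteq> normalized_boundaries (Suc n)"
  proof
    fix x assume "x \<in> nondeg ` boundaries n"
    then obtain s where s: "s \<in> S (Suc n)" "x = nondeg (bdry (Suc n) s)" by (auto simp: boundaries_def)
    then have "x = bdry (Suc n) (nondeg s)" using nondeg_bdry by simp
    moreover have "nondeg s \<in> normalized (Suc n)"
      using nondeg_in_S[OF s(1)] nondeg_idem by (simp add: normalized_def)
    ultimately show "x \<in> normalized_boundaries (Suc n)" by (simp add: normalized_boundaries_def)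
  qed
  show "normalized_boundaries (Suc n) \<subseteq> nondeg ` boundaries n"
  proof
    fix b assume "b \<in> normalized_boundaries (Suc n)"
    then obtain t where t: "t \<in> S (Suc n)" "nondeg t = t" "b = bdry (Suc n) t"
      by (auto simp: normalized_boundaries_def normalized_def)
    then have "b = nondeg (bdry (Suc n) t)" using nondeg_bdry_nondeg by simp
    then show "b \<in> nondeg ` boundaries n" using t(1) by (auto simp: boundaries_def)
  qed
qed

lemma dim_cycles: "FS.dim (cycles n) = FS.dim (degenerate_cycles n) + FS.dim (normalized_cycles n)"
proof -
  obtain W where W: "finite W" "S n \<subseteq> FS.span W" using S_finitely_spanned by blast
  have "cycles n = S n \<inter> {s. bdry n s = 0}" by (auto simp: cycles_def)
  then have "FS.subspace (cycles n)"
    using FS.subspace_inter[OF subspace_S FP.linear_subspace_kernel[OF linear_bdry]] by simp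
  then have "FS.dim (cycles n) = FS.dim {x\<in>cycles n. nondeg x = 0} + FS.dim (nondeg ` cycles n)"
    by (rule FP.dim_eq_dim_kernel_add_dim_image[OF linear_nondeg _ W(1)]) (use W in \<open>auto simp: cycles_def\<close>)
  moreover have "{x\<in>cycles n. nondeg x = 0} = degenerate_cycles n"
    by (auto simp: degenerate_cycles_def cycles_def)
  ultimately show ?thesis by (simp add: nondeg_image_cycles)
qed

lemma dim_boundaries:
  "FS.dim (boundaries n) = FS.dim (degenerate_cycles n) + FS.dim (normalized_boundaries (Suc n))"
proof -
  obtain W where W: "finite W" "S (Suc n) \<subseteq> FS.span W" using S_finitely_spanned by blast
  have "boundaries n \<subseteq> bdry (Suc n) ` FS.span W" using W(2) by (auto simp: boundaries_def)
  also have "\<dots> = FS.span (bdry (Suc n) ` W)" by (rule FP.linear_span_image[OF linear_bdry, symmetric])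
  finally have "FS.dim (boundaries n)
      = FS.dim {x\<in>boundaries n. nondeg x = 0} + FS.dim (nondeg ` boundaries n)"
    using FP.linear_subspace_image[OF linear_bdry subspace_S] W(1) unfolding boundaries_def
    by (intro FP.dim_eq_dim_kernel_add_dim_image[OF linear_nondeg]) auto
  then show ?thesis by (simp add: degenerate_boundaries nondeg_image_boundaries)
qed

lemma dim_normalized:
  "FS.dim (normalized n) = FS.dim (normalized_cycles n) + FS.dim (normalized_boundaries n)"
proof -
  obtain W where W: "finite W" "normalized n \<subseteq> FS.span W" using normalized_finitely_spanned by blast
  have "FS.dim (normalized n) = FS.dim {x\<in>normalized n. bdry n x = 0} + FS.dim (bdry n ` normalized n)"
    by (rule FP.dim_eq_dim_kernel_add_dim_image[OF linear_bdry subspace_normalized W])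
  moreover have "{x\<in>normalized n. bdry n x = 0} = normalized_cycles n"
    by (auto simp: normalized_def normalized_cycles_def)
  ultimately show ?thesis by (simp add: normalized_boundaries_def)
qed

section \<open>The Euler characteristic of the normalized complex\<close>

abbreviation "strict_chains n \<equiv> {\<sigma>\<in>chains P n. distinct \<sigma>}"

lemma normalized_vanish:
  assumes "card (UNIV::'a set) \<le> n"
  shows "normalized n = {0}"
proof -
  have "strict_chains n = {}" using distinct_chain_length_less assms by fastforce
  then show ?thesis unfolding normalized_eq_direct_sum by (auto simp: direct_sum_def)
qed

lemma hs_dim_eq_normalized:
  "hs_dim scale P F res n
    = int (FS.dim (normalized_cycles n)) - int (FS.dim (normalized_boundaries (Suc n)))"
proof -
  have "{s \<in> S n. boundary P res n s = 0} = cycles n"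
    using boundary_eq_bdry by (auto simp: cycles_def)
  moreover have "boundary P res (Suc n) ` S (Suc n) = boundaries n"
    using boundary_eq_bdry by (auto simp: image_def boundaries_def)
  ultimately show ?thesis unfolding hs_dim_def by (simp add: dim_cycles dim_boundaries)
qed

lemma hs_dim_vanish:
  assumes "card (UNIV::'a set) \<le> n"
  shows "hs_dim scale P F res n = 0"
proof -
  have "normalized_cycles n = {0}" "normalized_boundaries (Suc n) = {0}"
    using normalized_vanish[of n] normalized_vanish[of "Suc n"] assms S_0 bdry_0 nondeg_0
    by (auto simp: normalized_cycles_def normalized_def normalized_boundaries_def)
  then show ?thesis by (simp add: hs_dim_eq_normalized FS.dim_zero_subspace)
qed

lemma euler_char_hs_dim:
  assumes M: "card (UNIV::'a set) \<le> M"
  shows "(\<Sum>n<M. (-1)^n * hs_dim scale P F res n)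
    = (\<Sum>n<M. (-1)^n * (\<Sum>\<sigma>\<in>strict_chains n. int (V.dim (F (hd \<sigma>)))))"
proof -
  define d where "d n = int (FS.dim (normalized n))" for n
  define b where "b n = int (FS.dim (normalized_boundaries n))" for n
  have "normalized 0 \<noteq> {}" using S_0 nondeg_0 by (auto simp: normalized_def)
  then have "normalized_boundaries 0 = {0}" by (auto simp: normalized_boundaries_def bdry_def)
  moreover have "normalized_boundaries M = {0}"
    using normalized_vanish[OF M] bdry_0 by (simp add: normalized_boundaries_def)
  ultimately have b: "b 0 = 0" "b M = 0" by (simp_all add: b_def FS.dim_zero_subspace)
  have "hs_dim scale P F res n = d n - b n - b (Suc n)" for n
    unfolding hs_dim_eq_normalized d_def b_def using dim_normalized[of n] by simp
  then have "(\<Sum>n<M. (-1)^n * hs_dim scale P F res n) = (\<Sum>n<M. (-1)^n * d n)"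
    using alternating_sum_telescope[of d b M] b by simp
  moreover have "d n = (\<Sum>\<sigma>\<in>strict_chains n. int (V.dim (F (hd \<sigma>))))" for n
  proof -
    have "finite (strict_chains n)" by (rule finite_subset[OF _ finite_chains]) auto
    then show ?thesis
      unfolding d_def normalized_eq_direct_sum by (simp add: dim_direct_sum[OF fd_subspaces_F])
  qed
  ultimately show ?thesis by simp
qed

end

section \<open>Strict chains and the Moebius function\<close>

abbreviation above_bot :: "'a::{finite,order_bot} set" where "above_bot \<equiv> UNIV - {bot}"

definition strict_chain_count :: "nat \<Rightarrow> 'a::{finite,order_bot} \<Rightarrow> nat" where
  "strict_chain_count n x = card {\<sigma>\<in>chains above_bot n. distinct \<sigma> \<and> hd \<sigma> = x}"

lemma strict_chain_count_0:
  assumes x: "x \<noteq> bot"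
  shows "strict_chain_count 0 x = 1"
proof -
  have "{\<sigma>\<in>chains above_bot 0. distinct \<sigma> \<and> hd \<sigma> = x} = {[x]}"
    using x by (auto simp: chains_def length_Suc_conv)
  then show ?thesis by (simp add: strict_chain_count_def)
qed

lemma strict_chain_count_Suc:
  assumes x: "x \<noteq> bot"
  shows "strict_chain_count (Suc n) x = (\<Sum>y\<in>{y\<in>above_bot. y < x}. strict_chain_count n y)"
proof -
  let ?A = "\<lambda>y. {\<sigma>\<in>chains above_bot n. distinct \<sigma> \<and> hd \<sigma> = y}"
  have fin: "finite (?A y)" for y by (rule finite_subset[OF _ finite_chains]) auto
  have e: "{\<sigma>\<in>chains above_bot (Suc n). distinct \<sigma> \<and> hd \<sigma> = x}
      = (\<Union>y\<in>{y\<in>above_bot. y < x}. Cons x ` ?A y)"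
  proof (intro set_eqI iffI)
    fix \<sigma> assume s: "\<sigma> \<in> {\<sigma>\<in>chains above_bot (Suc n). distinct \<sigma> \<and> hd \<sigma> = x}"
    then obtain \<tau> where t: "\<sigma> = x # \<tau>" using chainsD[of \<sigma>] by (cases \<sigma>) auto
    have c: "\<tau> \<in> chains above_bot n" "hd \<tau> \<le> x" using s t Cons_in_chains_iff by auto
    have "\<tau> \<noteq> []" using c chainsD by fastforce
    then have "hd \<tau> \<noteq> x" using s t by (auto simp: hd_in_set)
    moreover have "hd \<tau> \<in> above_bot" using c(1) chain_hd_conv_nth chain_nth_in by fastforce
    ultimately show "\<sigma> \<in> (\<Union>y\<in>{y\<in>above_bot. y < x}. Cons x ` ?A y)" using s t c by auto
  next
    fix \<sigma> assume "\<sigma> \<in> (\<Union>y\<in>{y\<in>above_bot. y < x}. Cons x ` ?A y)"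
    then obtain y \<tau> where y: "y \<in> above_bot" "y < x"
      and t: "\<tau> \<in> chains above_bot n" "distinct \<tau>" "hd \<tau> = y" and s: "\<sigma> = x # \<tau>"
      by auto
    have "x \<notin> set \<tau>" using chain_le_hd[OF t(1)] t(3) y(2) by fastforce
    then show "\<sigma> \<in> {\<sigma>\<in>chains above_bot (Suc n). distinct \<sigma> \<and> hd \<sigma> = x}"
      using s t y x Cons_in_chains_iff[of x \<tau> above_bot n] by auto
  qed
  have "strict_chain_count (Suc n) x = card (\<Union>y\<in>{y\<in>above_bot. y < x}. Cons x ` ?A y)"
    unfolding strict_chain_count_def e ..
  also have "\<dots> = (\<Sum>y\<in>{y\<in>above_bot. y < x}. card (Cons x ` ?A y))"
    by (rule card_UN_disjoint) (use fin in auto)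
  also have "\<dots> = (\<Sum>y\<in>{y\<in>above_bot. y < x}. strict_chain_count n y)"
    by (rule sum.cong) (auto simp: strict_chain_count_def card_image)
  finally show ?thesis .
qed

lemma strict_chain_count_vanish:
  fixes x :: "'a::{finite,order_bot}"
  assumes "card (UNIV::'a set) \<le> n"
  shows "strict_chain_count n x = 0"
proof -
  have "{\<sigma>\<in>chains above_bot n. distinct \<sigma> \<and> hd \<sigma> = x} = {}"
    using distinct_chain_length_less assms by fastforce
  then show ?thesis by (simp only: strict_chain_count_def card.empty)
qed

definition chain_euler_char :: "'a::{finite,order_bot} \<Rightarrow> int" where
  "chain_euler_char x = (\<Sum>n<card (UNIV::'a set). (-1)^n * int (strict_chain_count n x))"

lemma chain_euler_char_eq_sum:
  assumes "card (UNIV::'a::{finite,order_bot} set) \<le> M"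
  shows "(\<Sum>n<M. (-1)^n * int (strict_chain_count n (x::'a))) = chain_euler_char x"
proof -
  let ?c = "card (UNIV::'a set)"
  have "(\<Sum>n<M. (-1)^n * int (strict_chain_count n x)) = (\<Sum>n<?c. (-1)^n * int (strict_chain_count n x))"
    by (rule sum.mono_neutral_right) (use assms strict_chain_count_vanish in auto)
  then show ?thesis by (simp add: chain_euler_char_def)
qed

lemma chain_euler_char_rec:
  assumes x: "(x::'a::{finite,order_bot}) \<noteq> bot"
  shows "chain_euler_char x = 1 - (\<Sum>y\<in>{y\<in>above_bot. y < x}. chain_euler_char y)"
proof -
  let ?c = "card (UNIV::'a set)"
  have "chain_euler_char x = (\<Sum>n<Suc ?c. (-1)^n * int (strict_chain_count n x))"
    using chain_euler_char_eq_sum[of "Suc ?c" x] by simp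
  also have "\<dots> = int (strict_chain_count 0 x)
      + (\<Sum>n<?c. (-1)^(Suc n) * int (strict_chain_count (Suc n) x))"
    by (subst sum.lessThan_Suc_shift) simp
  also have "\<dots> = 1 - (\<Sum>n<?c. (\<Sum>y\<in>{y\<in>above_bot. y < x}. (-1)^n * int (strict_chain_count n y)))"
    using x by (simp add: strict_chain_count_0 strict_chain_count_Suc sum_negf sum_distrib_left)
  also have "\<dots> = 1 - (\<Sum>y\<in>{y\<in>above_bot. y < x}. chain_euler_char y)"
    by (simp add: chain_euler_char_def sum.swap[of _ "{..<?c}"])
  finally show ?thesis .
qed

lemma mobius_bot_rec:
  assumes x: "(x::'a::{finite,order_bot}) \<noteq> bot"
  shows "mobius bot x = - 1 - (\<Sum>z\<in>{z\<in>above_bot. z < x}. mobius bot z)"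
proof -
  have bx: "bot < x" using x bot.not_eq_extremum by blast
  have e: "{z. bot \<le> z \<and> z < x} = insert bot {z\<in>above_bot. z < x}" using bx by auto
  have "mobius bot x = - (\<Sum>z\<in>{z. bot \<le> z \<and> z < x}. mobius bot z)"
    using bx x by (subst mobius.simps) simp
  also have "\<dots> = - (mobius (bot::'a) bot + (\<Sum>z\<in>{z\<in>above_bot. z < x}. mobius bot z))"
    unfolding e by (subst sum.insert) auto
  also have "mobius (bot::'a) bot = 1" by (subst mobius.simps) simp
  finally show ?thesis by simp
qed

lemma chain_euler_char_eq_mobius:
  "(x::'a::{finite,order_bot}) \<noteq> bot \<Longrightarrow> chain_euler_char x = - mobius bot x"
proof (induction x rule: measure_induct_rule[where f = "\<lambda>x. card {w. w < x}"])
  case (less x)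
  have ih: "chain_euler_char y = - mobius bot y" if "y \<in> {y\<in>above_bot. y < x}" for y
    using that less.IH card_less_mono_finite by auto
  have "chain_euler_char x = 1 - (\<Sum>y\<in>{y\<in>above_bot. y < x}. chain_euler_char y)"
    by (rule chain_euler_char_rec[OF less.prems])
  also have "\<dots> = 1 + (\<Sum>y\<in>{y\<in>above_bot. y < x}. mobius bot y)" using ih by (simp add: sum_negf)
  also have "\<dots> = - mobius bot x" using mobius_bot_rec[OF less.prems] by simp
  finally show ?case .
qed

lemma sum_strict_chains_by_hd:
  fixes w :: "'a::{finite,order_bot} \<Rightarrow> int"
  shows "(\<Sum>\<sigma>\<in>{\<sigma>\<in>chains above_bot n. distinct \<sigma>}. w (hd \<sigma>))
    = (\<Sum>x\<in>above_bot. int (strict_chain_count n x) * w x)"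
proof -
  let ?C = "{\<sigma>\<in>chains above_bot n. distinct \<sigma>}"
  have "hd ` ?C \<subseteq> above_bot"
    using chain_hd_conv_nth chain_nth_in by fastforce
  moreover have "finite ?C" by (rule finite_subset[OF _ finite_chains]) auto
  ultimately have "(\<Sum>\<sigma>\<in>?C. w (hd \<sigma>)) = (\<Sum>x\<in>above_bot. \<Sum>\<sigma>\<in>{\<sigma>\<in>?C. hd \<sigma> = x}. w (hd \<sigma>))"
    by (intro sum.group[symmetric]) auto
  also have "\<dots> = (\<Sum>x\<in>above_bot. \<Sum>\<sigma>\<in>{\<sigma>\<in>chains above_bot n. distinct \<sigma> \<and> hd \<sigma> = x}. w x)"
    by (intro sum.cong) auto
  finally show ?thesis by (simp add: strict_chain_count_def)
qed

lemma alternating_strict_chain_sum: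
  fixes w :: "'a::{finite,order_bot} \<Rightarrow> int"
  assumes M: "card (UNIV::'a set) \<le> M"
  shows "(\<Sum>n<M. (-1)^n * (\<Sum>\<sigma>\<in>{\<sigma>\<in>chains above_bot n. distinct \<sigma>}. w (hd \<sigma>)))
       = - (\<Sum>x\<in>above_bot. mobius bot x * w x)"
proof -
  have "(\<Sum>n<M. (-1)^n * (\<Sum>\<sigma>\<in>{\<sigma>\<in>chains above_bot n. distinct \<sigma>}. w (hd \<sigma>)))
      = (\<Sum>x\<in>above_bot. (\<Sum>n<M. (-1)^n * int (strict_chain_count n x)) * w x)"
    unfolding sum_strict_chains_by_hd sum_distrib_left sum_distrib_right
    by (subst sum.swap) (simp only: mult.assoc)
  also have "\<dots> = (\<Sum>x\<in>above_bot. chain_euler_char x * w x)"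
    using chain_euler_char_eq_sum[OF M] by simp
  also have "\<dots> = (\<Sum>x\<in>above_bot. - mobius bot x * w x)"
    by (rule sum.cong) (auto simp: chain_euler_char_eq_mobius)
  finally show ?thesis by (simp add: sum_negf)
qed

lemma poly_pderiv_chi_poly_1:
  "poly (pderiv (chi_poly scale (F :: 'a::{finite,order_bot} \<Rightarrow> 'v::ab_group_add set))) 1
     = (\<Sum>x\<in>UNIV. mobius bot x * int (vector_space.dim scale (F x)))"
  unfolding chi_poly_def higher_pderiv_sum[of 1, simplified] poly_sum pderiv_monom poly_monom
  by (simp add: mult.commute)

theorem corollary1:
  fixes scale :: "'k::field \<Rightarrow> 'v::ab_group_add \<Rightarrow> 'v"
    and F :: "'a::{finite,bounded_lattice} \<Rightarrow> 'v set"
    and res :: "'a \<Rightarrow> 'a \<Rightarrow> 'v \<Rightarrow> 'v"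
  assumes "vector_space scale"
    and "is_fd_sheaf scale F res"
  shows "finite {n. hs_dim scale (UNIV - {bot}) F res n \<noteq> 0} \<and>
         (\<Sum>n\<in>{n. hs_dim scale (UNIV - {bot}) F res n \<noteq> 0}.
             (-1) ^ n * hs_dim scale (UNIV - {bot}) F res n)
         = int (vector_space.dim scale (F bot)) - poly (pderiv (chi_poly scale F)) 1"
proof -
  interpret sheaf_on scale F res "UNIV - {bot}" using assms by (rule sheaf_on.intro)
  let ?M = "card (UNIV::'a set)" and ?h = "hs_dim scale (UNIV - {bot}) F res"
  have support: "{n. ?h n \<noteq> 0} \<subseteq> {..<?M}" using hs_dim_vanish by (auto simp: not_less[symmetric])
  then have "(\<Sum>n\<in>{n. ?h n \<noteq> 0}. (-1) ^ n * ?h n) = (\<Sum>n<?M. (-1) ^ n * ?h n)"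
    by (intro sum.mono_neutral_left) auto
  also have "\<dots> = (\<Sum>n<?M. (-1)^n * (\<Sum>\<sigma>\<in>strict_chains n. int (V.dim (F (hd \<sigma>)))))"
    by (rule euler_char_hs_dim) simp
  also have "\<dots> = - (\<Sum>x\<in>UNIV - {bot}. mobius bot x * int (V.dim (F x)))"
    by (rule alternating_strict_chain_sum) simp
  also have "\<dots> = int (V.dim (F bot)) - poly (pderiv (chi_poly scale F)) 1"
    using sum.remove[of UNIV bot "\<lambda>x. mobius bot x * int (V.dim (F x))"]
    by (simp add: poly_pderiv_chi_poly_1 mobius.simps[of bot bot])
  finally show ?thesis using finite_subset[OF support] by simp
qed

end
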